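(* Let $G$ be a finite simple connected graph on $n$ vertices with adjacency matrix $A$, and let $\mu_{\max}(A)=\mu_1\ge \mu_2\ge\cdots\ge\mu_n$ be the eigenvalues of $A$. For $i\in[n]$ write $\mu_i^\uparrow(A)=\mu_{n+1-i}$ for the $i$-th smallest eigenvalue. Let $\kappa$ be the smallest integer such that \[ 0\ \ge\ \mu_{\max}(A)+\sum_{i=1}^{\kappa}\mu_i^\uparrow(A). \] Then the quantum chromatic number of $G$ satisfies $\chi_q(G)\ge 1+\kappa$.
   Context: A quantum $c$-coloring of a graph $G=(V,E)$ is a collection of orthogonal projectors $\{P_{v,k}: v\in V, k\in[c]\}$ in $\mathbb{C}^{d\times d}$, for some integer $d>0$, such that $\sum_{k\in[c]}P_{v,k}=I_d$ for every vertex $v\in V$, and $P_{v,k}P_{w,k}=0_d$ for every edge $vw\in E$ and every $k\in[c]$. The quantum chromatic number $\chi_q(G)$ is the smallest $c$ for which $G$ admits a quantum $c$-coloring in some dimension $d>0$. *)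

theory Defs
  imports "Jordan_Normal_Form.Schur_Decomposition" "Jordan_Normal_Form.Char_Poly"
begin

definition simple_graph :: "nat \<Rightarrow> (nat \<Rightarrow> nat \<Rightarrow> bool) \<Rightarrow> bool" where
  "simple_graph n E \<longleftrightarrow> (\<forall>u v. E u v \<longrightarrow> u < n \<and> v < n) \<and> (\<forall>u v. E u v \<longrightarrow> E v u) \<and> (\<forall>u. \<not> E u u)"

definition connected_graph :: "nat \<Rightarrow> (nat \<Rightarrow> nat \<Rightarrow> bool) \<Rightarrow> bool" where
  "connected_graph n E \<longleftrightarrow> (\<forall>u<n. \<forall>v<n. E\<^sup>*\<^sup>* u v)"

definition adjacency_matrix :: "nat \<Rightarrow> (nat \<Rightarrow> nat \<Rightarrow> bool) \<Rightarrow> real mat" where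
  "adjacency_matrix n E = mat n n (\<lambda>(i,j). if E i j then 1 else 0)"

text \<open>Eigenvalues (with multiplicity) of a matrix whose characteristic polynomial splits,
  listed in ascending order: mu_asc ! (i-1) is the i-th smallest eigenvalue.\<close>
definition eigenvalues_asc :: "real mat \<Rightarrow> real list" where
  "eigenvalues_asc A = (THE es. sorted es \<and> char_poly A = (\<Prod>e\<leftarrow>es. [:- e, 1:]))"

definition mu_max :: "real mat \<Rightarrow> real" where
  "mu_max A = last (eigenvalues_asc A)"

definition orth_projector :: "nat \<Rightarrow> complex mat \<Rightarrow> bool" where
  "orth_projector d P \<longleftrightarrow> P \<in> carrier_mat d d \<and> P * P = P \<and> mat_adjoint P = P"

definition quantum_coloring ::
  "nat \<Rightarrow> (nat \<Rightarrow> nat \<Rightarrow> bool) \<Rightarrow> nat \<Rightarrow> nat \<Rightarrow> (nat \<Rightarrow> nat \<Rightarrow> complex mat) \<Rightarrow> bool" where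
  "quantum_coloring n E c d P \<longleftrightarrow>
     (\<forall>v<n. \<forall>k<c. orth_projector d (P v k)) \<and>
     (\<forall>v<n. foldr (\<lambda>k M. P v k + M) [0..<c] (0\<^sub>m d d) = 1\<^sub>m d) \<and>
     (\<forall>v w k. E v w \<longrightarrow> k < c \<longrightarrow> P v k * P w k = 0\<^sub>m d d)"

definition quantum_colorable :: "nat \<Rightarrow> (nat \<Rightarrow> nat \<Rightarrow> bool) \<Rightarrow> nat \<Rightarrow> bool" where
  "quantum_colorable n E c \<longleftrightarrow> (\<exists>d>0. \<exists>P. quantum_coloring n E c d P)"

definition quantum_chromatic_number :: "nat \<Rightarrow> (nat \<Rightarrow> nat \<Rightarrow> bool) \<Rightarrow> nat" where
  "quantum_chromatic_number n E = (LEAST c. quantum_colorable n E c)"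

end

(* Let a quantum c-coloring be given by projectors P(u,k) on C^d, and let phi_1, ..., phi_n be an
   orthonormal eigenbasis of A for the eigenvalues mu_1 <= ... <= mu_n.  Averaging the projectors
   P(u,k) over the vertices with the weights |phi_n(u)|^2 and diagonalising these averages produces
   at most c d orthonormal vectors in C^n (x) C^d that are isotropic for A (x) I (this is where
   P(u,k) P(w,k) = 0 on edges enters) and whose span contains phi_n (x) e_s for every s.  Measuring
   them against the basis phi_i (x) e_s gives weights w_i in [0,1] with w_n = 1, sum w_i <= c and
   sum w_i mu_i = 0.  Since the mu_i are sorted, some k <= c - 1 then satisfies
   mu_n + mu_1 + ... + mu_k <= sum w_i mu_i = 0, hence kappa <= c - 1. *)

theory Submission
  imports Defs
begin

section \<open>Adjoints and unitary matrices\<close>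

lemma dim_mat_adjoint [simp]:
  "dim_row (mat_adjoint A) = dim_col A" "dim_col (mat_adjoint A) = dim_row A"
  unfolding mat_adjoint_def by auto

lemma index_mat_adjoint [simp]:
  "i < dim_col A \<Longrightarrow> j < dim_row A \<Longrightarrow> mat_adjoint (A :: complex mat) $$ (i,j) = cnj (A $$ (j,i))"
  unfolding mat_adjoint_def by (simp add: mat_of_rows_index)

lemma mat_adjoint_carrier [simp]: "A \<in> carrier_mat m n \<Longrightarrow> mat_adjoint A \<in> carrier_mat n m"
  unfolding carrier_mat_def by auto

lemma mat_adjoint_mat_adjoint [simp]: "mat_adjoint (mat_adjoint (A :: complex mat)) = A"
  by (rule eq_matI) auto

lemma index_mult_mat_sum:
  "A \<in> carrier_mat m k \<Longrightarrow> B \<in> carrier_mat k n \<Longrightarrow> i < m \<Longrightarrow> j < n \<Longrightarrow>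
   (A * B) $$ (i,j) = (\<Sum>r<k. A $$ (i,r) * B $$ (r,j))"
  by (auto simp: scalar_prod_def atLeast0LessThan)

lemma mat_adjoint_mult:
  assumes "(A :: complex mat) \<in> carrier_mat m k" "B \<in> carrier_mat k n"
  shows "mat_adjoint (A * B) = mat_adjoint B * mat_adjoint A"
proof (rule eq_matI)
  fix i j assume "i < dim_row (mat_adjoint B * mat_adjoint A)" "j < dim_col (mat_adjoint B * mat_adjoint A)"
  then have ij: "i < n" "j < m" using assms by auto
  have "mat_adjoint (A * B) $$ (i,j) = cnj ((A * B) $$ (j,i))"
    using ij assms by simp
  also have "\<dots> = cnj (\<Sum>r<k. A $$ (j,r) * B $$ (r,i))"
    using ij assms by (subst index_mult_mat_sum[of _ m k _ n]) auto
  also have "\<dots> = (\<Sum>r<k. cnj (B $$ (r,i)) * cnj (A $$ (j,r)))"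
    by (simp add: mult.commute)
  also have "\<dots> = (mat_adjoint B * mat_adjoint A) $$ (i,j)"
    using ij assms by (subst index_mult_mat_sum[of _ n k _ m]) auto
  finally show "mat_adjoint (A * B) $$ (i,j) = (mat_adjoint B * mat_adjoint A) $$ (i,j)" .
qed (use assms in auto)

lemma sum_mult_delta:
  assumes "finite S"
  shows "(\<Sum>r\<in>S. f r * (if r = i then g r else 0)) = (if i \<in> S then f i * g i else (0 :: 'a :: semiring_0))"
proof -
  have "(\<Sum>r\<in>S. f r * (if r = i then g r else 0)) = (\<Sum>r\<in>S. if r = i then f r * g r else 0)"
    by (rule sum.cong) auto
  then show ?thesis using assms by simp
qed

lemma sum_mult_delta':
  assumes "finite S"
  shows "(\<Sum>r\<in>S. f r * (if i = r then g r else 0)) = (if i \<in> S then f i * g i else (0 :: 'a :: semiring_0))"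
  using sum_mult_delta[OF assms, of f i g] by (simp add: eq_commute[of i])

lemma cnj_mult_self: "cnj z * z = (complex_of_real (cmod z))\<^sup>2"
  using complex_norm_square[of z] by (simp add: mult.commute)

lemma mult_cnj_self: "z * cnj z = (complex_of_real (cmod z))\<^sup>2"
  using complex_norm_square[of z] by simp

definition unitary :: "nat \<Rightarrow> complex mat \<Rightarrow> bool" where
  "unitary n U \<longleftrightarrow> U \<in> carrier_mat n n \<and> mat_adjoint U * U = 1\<^sub>m n"

lemma unitary_carrier: "unitary n U \<Longrightarrow> U \<in> carrier_mat n n"
  unfolding unitary_def by simp

lemma unitary_left_inverse: "unitary n U \<Longrightarrow> mat_adjoint U * U = 1\<^sub>m n"
  unfolding unitary_def by simp

lemma unitary_right_inverse: "unitary n U \<Longrightarrow> U * mat_adjoint U = 1\<^sub>m n"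
  unfolding unitary_def using mat_mult_left_right_inverse mat_adjoint_carrier by blast

lemma unitary_mult:
  assumes U: "unitary n U" and V: "unitary n V"
  shows "unitary n (U * V)"
proof -
  have [simp]: "U \<in> carrier_mat n n" "V \<in> carrier_mat n n"
    using U V by (auto simp: unitary_carrier)
  have "mat_adjoint (U * V) * (U * V) = (mat_adjoint V * mat_adjoint U) * (U * V)"
    by (simp add: mat_adjoint_mult[of _ n n _ n])
  also have "\<dots> = mat_adjoint V * (mat_adjoint U * (U * V))"
    using mult_carrier_mat[of U n n V n] by (intro assoc_mult_mat[of _ n n _ n _ n]) auto
  also have "mat_adjoint U * (U * V) = V"
    using unitary_left_inverse[OF U] left_mult_one_mat[of V n n]
    by (simp flip: assoc_mult_mat[of _ n n U n V n])
  finally show ?thesis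
    using V mult_carrier_mat[of U n n V n] by (simp add: unitary_def)
qed

lemma unitary_four_block:
  assumes "unitary m U"
  shows "unitary (Suc m) (four_block_mat (1\<^sub>m 1) (0\<^sub>m 1 m) (0\<^sub>m m 1) U)"
proof -
  have U: "U \<in> carrier_mat m m" using assms by (rule unitary_carrier)
  have adj: "mat_adjoint (four_block_mat (1\<^sub>m 1) (0\<^sub>m 1 m) (0\<^sub>m m 1) U)
      = four_block_mat (1\<^sub>m 1) (0\<^sub>m 1 m) (0\<^sub>m m 1) (mat_adjoint U)"
    by (rule eq_matI) (use U in auto)
  show ?thesis
    unfolding unitary_def adj
    by (subst mult_four_block_mat[of _ 1 1 _ m _ m]) (use U unitary_left_inverse[OF assms] in auto)
qed

lemma unitary_of_corthogonal:
  assumes ws: "set ws \<subseteq> carrier_vec n" "corthogonal ws" "length ws = n"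
  shows "\<exists>U. unitary n U \<and> (\<forall>i<n. \<exists>\<alpha>. col U i = \<alpha> \<cdot>\<^sub>v ws ! i)"
proof -
  have wsc: "i < n \<Longrightarrow> ws ! i \<in> carrier_vec n" for i using ws by auto
  define nrm where "nrm i = (\<Sum>r<n. (cmod (ws ! i $ r))\<^sup>2)" for i
  have orth: "(\<Sum>r<n. cnj (ws ! i $ r) * ws ! j $ r) = (if i = j then complex_of_real (nrm i) else 0)"
    if ij: "i < n" "j < n" for i j
  proof -
    have "ws ! j \<bullet>c ws ! i = (\<Sum>r<n. cnj (ws ! i $ r) * ws ! j $ r)"
      using wsc[OF ij(1)] wsc[OF ij(2)] by (auto simp: scalar_prod_def atLeast0LessThan mult.commute)
    moreover have "(ws ! j \<bullet>c ws ! i = 0) = (j \<noteq> i)"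
      using ws ij unfolding corthogonal_def by auto
    ultimately show ?thesis unfolding nrm_def by (auto simp: cnj_mult_self)
  qed
  have nrm_pos: "nrm i > 0" if i: "i < n" for i
  proof -
    have "ws ! i \<bullet>c ws ! i \<noteq> 0" using ws i unfolding corthogonal_def by auto
    then have "nrm i \<noteq> 0"
      using orth[OF i i] wsc[OF i] by (auto simp: scalar_prod_def atLeast0LessThan mult.commute)
    moreover have "nrm i \<ge> 0" unfolding nrm_def by (auto intro: sum_nonneg)
    ultimately show ?thesis by auto
  qed
  define U where "U = mat n n (\<lambda>(r,i). complex_of_real (1 / sqrt (nrm i)) * ws ! i $ r)"
  have U: "U \<in> carrier_mat n n" unfolding U_def by auto
  have "mat_adjoint U * U = 1\<^sub>m n"
  proof (rule eq_matI)
    fix i j assume "i < dim_row (1\<^sub>m n :: complex mat)" "j < dim_col (1\<^sub>m n :: complex mat)"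
    then have ij: "i < n" "j < n" by auto
    have "(mat_adjoint U * U) $$ (i,j) = (\<Sum>r<n. cnj (U $$ (r,i)) * U $$ (r,j))"
      using U ij by (subst index_mult_mat_sum[of _ n n]) auto
    also have "\<dots> = complex_of_real (1 / sqrt (nrm i) * (1 / sqrt (nrm j)))
                     * (\<Sum>r<n. cnj (ws ! i $ r) * ws ! j $ r)"
      using ij unfolding U_def by (simp add: sum_distrib_left algebra_simps)
    also have "\<dots> = 1\<^sub>m n $$ (i,j)"
      using orth[OF ij] nrm_pos[OF ij(1)] nrm_pos[OF ij(2)] ij by (auto simp flip: of_real_mult)
    finally show "(mat_adjoint U * U) $$ (i,j) = 1\<^sub>m n $$ (i,j)" .
  qed (use U in auto)
  moreover have "col U i = complex_of_real (1 / sqrt (nrm i)) \<cdot>\<^sub>v ws ! i" if "i < n" for i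
    using that wsc[OF that] unfolding U_def by (intro eq_vecI) auto
  ultimately show ?thesis using U unfolding unitary_def by blast
qed

lemma unitary_with_first_column:
  assumes v: "v \<in> carrier_vec n" "v \<noteq> 0\<^sub>v n"
  shows "\<exists>U \<alpha>. unitary n U \<and> col U 0 = \<alpha> \<cdot>\<^sub>v v"
proof -
  interpret cof_vec_space n "TYPE(complex)" .
  define b where "b = basis_completion v"
  define ws where "ws = gram_schmidt n b"
  from basis_completion[OF v, folded b_def]
  have b: "distinct b" "\<not> lin_dep (set b)" "set b \<subseteq> carrier_vec n" "hd b = v" "length b = n"
    by auto
  have n: "n \<noteq> 0" using v by auto
  then obtain vs where bv: "b = v # vs" using b by (cases b) auto
  from gram_schmidt_result[OF b(3,1,2) refl, folded ws_def]
  have ws: "set ws \<subseteq> carrier_vec n" "corthogonal ws" "length ws = n" by (auto simp: b(5))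
  have "ws ! 0 = v"
    using gram_schmidt_hd[OF v(1), of vs, folded bv ws_def] ws(3) n by (cases ws) auto
  then show ?thesis using unitary_of_corthogonal[OF ws] n by auto
qed

section \<open>The spectral theorem for Hermitian matrices\<close>

lemma hermitian_first_column_block:
  fixes A :: "complex mat"
  assumes A: "A \<in> carrier_mat (Suc m) (Suc m)" "mat_adjoint A = A"
    and col: "\<And>i. i < Suc m \<Longrightarrow> A $$ (i,0) = (if i = 0 then e else 0)"
  shows "\<exists>B. B \<in> carrier_mat m m \<and> mat_adjoint B = B \<and>
           A = four_block_mat (mat 1 1 (\<lambda>_. e)) (0\<^sub>m 1 m) (0\<^sub>m m 1) B"
proof -
  have row: "A $$ (0,j) = (if j = 0 then e else 0)" if j: "j < Suc m" for j
  proof -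
    have "A $$ (0,j) = cnj (A $$ (j,0))"
      using A j by (metis carrier_matD index_mat_adjoint zero_less_Suc)
    then show ?thesis using col[OF j] col[of 0] by (auto split: if_splits)
  qed
  define B where "B = mat m m (\<lambda>(i,j). A $$ (Suc i, Suc j))"
  have B: "B \<in> carrier_mat m m" unfolding B_def by auto
  have "A = four_block_mat (mat 1 1 (\<lambda>_. e)) (0\<^sub>m 1 m) (0\<^sub>m m 1) B"
    by (rule eq_matI) (use A col row in \<open>auto simp: B_def\<close>)
  moreover have "mat_adjoint B = B"
  proof (rule eq_matI)
    fix i j assume "i < dim_row B" "j < dim_col B"
    then show "mat_adjoint B $$ (i,j) = B $$ (i,j)"
      using A B by (metis B_def carrier_matD index_mat(1) index_mat_adjoint Suc_less_eq case_prod_conv)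
  qed (use B in auto)
  ultimately show ?thesis using B by blast
qed

lemma unitary_conjugate_first_column:
  fixes H :: "complex mat"
  assumes H: "H \<in> carrier_mat n n" and U: "unitary n U"
    and eigen: "H *\<^sub>v col U 0 = e \<cdot>\<^sub>v col U 0" and i: "i < n"
  shows "(mat_adjoint U * H * U) $$ (i,0) = (if i = 0 then e else 0)"
proof -
  have Uc: "U \<in> carrier_mat n n" using U by (rule unitary_carrier)
  have "mat_adjoint U * H * U = mat_adjoint U * (H * U)"
    using Uc H by (simp add: assoc_mult_mat[of _ n n _ n _ n])
  then have "(mat_adjoint U * H * U) $$ (i,0) = row (mat_adjoint U) i \<bullet> (H *\<^sub>v col U 0)"
    using Uc H i by (simp add: mult_mat_vec_def)
  also have "\<dots> = e * (mat_adjoint U * U) $$ (i,0)"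
    using Uc i unfolding eigen by simp
  finally show ?thesis using unitary_left_inverse[OF U] i by simp
qed

lemma hermitian_eigen_deflation:
  fixes H :: "complex mat"
  assumes H: "H \<in> carrier_mat (Suc m) (Suc m)" "mat_adjoint H = H" and e: "eigenvalue H e"
  shows "\<exists>U B. unitary (Suc m) U \<and> B \<in> carrier_mat m m \<and> mat_adjoint B = B \<and>
           mat_adjoint U * H * U = four_block_mat (mat 1 1 (\<lambda>_. e)) (0\<^sub>m 1 m) (0\<^sub>m m 1) B"
proof -
  define v where "v = find_eigenvector H e"
  have v: "eigenvector H v e" unfolding v_def by (rule find_eigenvector[OF H(1) e])
  then obtain U \<alpha> where U: "unitary (Suc m) U" and U0: "col U 0 = \<alpha> \<cdot>\<^sub>v v"
    using unitary_with_first_column[of v "Suc m"] H unfolding eigenvector_def by auto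
  have Uc: "U \<in> carrier_mat (Suc m) (Suc m)" using U by (rule unitary_carrier)
  have "H *\<^sub>v col U 0 = e \<cdot>\<^sub>v col U 0"
    using v H unfolding U0 eigenvector_def by (simp add: mult_mat_vec smult_smult_assoc mult.commute)
  then have "(mat_adjoint U * H * U) $$ (i,0) = (if i = 0 then e else 0)" if "i < Suc m" for i
    using unitary_conjugate_first_column[OF H(1) U _ that] by blast
  moreover have "mat_adjoint (mat_adjoint U * H * U) = mat_adjoint U * H * U"
    using Uc H by (simp add: mat_adjoint_mult[of _ "Suc m" "Suc m" _ "Suc m"]
        assoc_mult_mat[of _ "Suc m" "Suc m" _ "Suc m" _ "Suc m"])
  moreover have "mat_adjoint U * H * U \<in> carrier_mat (Suc m) (Suc m)" using Uc H by auto
  ultimately show ?thesis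
    using hermitian_first_column_block[of "mat_adjoint U * H * U" m e] U by blast
qed

lemma unitary_conjugate_char_poly:
  assumes U: "unitary n U" and H: "H \<in> carrier_mat n n"
  shows "char_poly (mat_adjoint U * H * U) = char_poly H"
proof (rule char_poly_similar)
  show "similar_mat (mat_adjoint U * H * U) H"
    unfolding similar_mat_def similar_mat_wit_def Let_def
    using H unitary_carrier[OF U] unitary_left_inverse[OF U] unitary_right_inverse[OF U]
    by (intro exI[of _ "mat_adjoint U"] exI[of _ U]) auto
qed

lemma unitary_conjugate_eqD:
  assumes U: "unitary n U" and H: "H \<in> carrier_mat n n" and eq: "mat_adjoint U * H * U = A"
  shows "H * U = U * A"
proof -
  have Uc: "U \<in> carrier_mat n n" using U by (rule unitary_carrier)
  have "U * A = U * (mat_adjoint U * H) * U"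
    unfolding eq[symmetric] using Uc H by (intro assoc_mult_mat[symmetric, of _ n n _ n _ n]) auto
  also have "U * (mat_adjoint U * H) = (U * mat_adjoint U) * H"
    using Uc H by (intro assoc_mult_mat[symmetric, of _ n n _ n _ n]) auto
  finally show ?thesis using unitary_right_inverse[OF U] H by simp
qed

definition diagonal_mat_of :: "nat \<Rightarrow> 'a :: zero list \<Rightarrow> 'a mat" where
  "diagonal_mat_of n es = mat n n (\<lambda>(i,j). if i = j then es ! i else 0)"

lemma four_block_diagonal_step:
  fixes B V :: "'a :: semiring_1 mat"
  assumes B: "B \<in> carrier_mat m m" and V: "V \<in> carrier_mat m m"
    and BV: "B * V = V * diagonal_mat_of m es"
  shows "four_block_mat (mat 1 1 (\<lambda>_. e)) (0\<^sub>m 1 m) (0\<^sub>m m 1) B * four_block_mat (1\<^sub>m 1) (0\<^sub>m 1 m) (0\<^sub>m m 1) V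
       = four_block_mat (1\<^sub>m 1) (0\<^sub>m 1 m) (0\<^sub>m m 1) V * diagonal_mat_of (Suc m) (e # es)"
proof -
  have D: "diagonal_mat_of m es \<in> carrier_mat m m" by (simp add: diagonal_mat_of_def)
  have "diagonal_mat_of (Suc m) (e # es)
      = four_block_mat (mat 1 1 (\<lambda>_. e)) (0\<^sub>m 1 m) (0\<^sub>m m 1) (diagonal_mat_of m es)"
    by (rule eq_matI) (auto simp: diagonal_mat_of_def)
  moreover have "four_block_mat (mat 1 1 (\<lambda>_. e)) (0\<^sub>m 1 m) (0\<^sub>m m 1) B * four_block_mat (1\<^sub>m 1) (0\<^sub>m 1 m) (0\<^sub>m m 1) V
      = four_block_mat (mat 1 1 (\<lambda>_. e)) (0\<^sub>m 1 m) (0\<^sub>m m 1) (B * V)"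
    using right_mult_one_mat[of "mat 1 1 (\<lambda>_. e)" 1 1]
    by (subst mult_four_block_mat[of _ 1 1 _ m _ m]) (use B V in auto)
  moreover have "four_block_mat (1\<^sub>m 1) (0\<^sub>m 1 m) (0\<^sub>m m 1) V * four_block_mat (mat 1 1 (\<lambda>_. e)) (0\<^sub>m 1 m) (0\<^sub>m m 1) (diagonal_mat_of m es)
      = four_block_mat (mat 1 1 (\<lambda>_. e)) (0\<^sub>m 1 m) (0\<^sub>m m 1) (V * diagonal_mat_of m es)"
    using left_mult_one_mat[of "mat 1 1 (\<lambda>_. e)" 1 1]
    by (subst mult_four_block_mat[of _ 1 1 _ m _ m]) (use V D in auto)
  ultimately show ?thesis using BV by simp
qed

lemma unitary_diagonalization_step:
  assumes U: "unitary (Suc m) U" and H: "H \<in> carrier_mat (Suc m) (Suc m)"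
    and UHU: "mat_adjoint U * H * U = four_block_mat (mat 1 1 (\<lambda>_. e)) (0\<^sub>m 1 m) (0\<^sub>m m 1) B"
    and B: "B \<in> carrier_mat m m" and V: "unitary m V" and BV: "B * V = V * diagonal_mat_of m es"
  defines "W \<equiv> four_block_mat (1\<^sub>m 1) (0\<^sub>m 1 m) (0\<^sub>m m 1) V"
  shows "H * (U * W) = (U * W) * diagonal_mat_of (Suc m) (e # es)"
proof -
  define n where "n = Suc m"
  have W: "unitary n W" unfolding W_def n_def using unitary_four_block[OF V] .
  have Bl: "four_block_mat (mat 1 1 (\<lambda>_. e)) (0\<^sub>m 1 m) (0\<^sub>m m 1) B \<in> carrier_mat n n"
    using B by (auto simp: n_def)
  have U': "unitary n U" and H': "H \<in> carrier_mat n n" using U H by (simp_all add: n_def)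
  have "H * (U * W) = (H * U) * W"
    using H' U' W by (simp add: assoc_mult_mat[of _ n n _ n _ n] unitary_carrier)
  also have "\<dots> = U * (four_block_mat (mat 1 1 (\<lambda>_. e)) (0\<^sub>m 1 m) (0\<^sub>m m 1) B * W)"
    using unitary_conjugate_eqD[OF U' H' UHU] U' W Bl
    by (simp add: assoc_mult_mat[of _ n n _ n _ n] unitary_carrier)
  also have "\<dots> = (U * W) * diagonal_mat_of n (e # es)"
    using four_block_diagonal_step[OF B unitary_carrier[OF V] BV] U' W
    by (simp add: W_def n_def assoc_mult_mat[of _ "Suc m" "Suc m" _ "Suc m" _ "Suc m"]
        unitary_carrier diagonal_mat_of_def)
  finally show ?thesis unfolding n_def .
qed

lemma hermitian_unitarily_diagonalizable:
  fixes H :: "complex mat"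
  assumes "H \<in> carrier_mat n n" "mat_adjoint H = H" "char_poly H = (\<Prod>e\<leftarrow>es. [:-e,1:])"
  shows "\<exists>U. unitary n U \<and> H * U = U * diagonal_mat_of n es"
  using assms
proof (induct es arbitrary: n H)
  case Nil
  with degree_monic_char_poly[of H n] have "n = 0" by auto
  then show ?case using Nil.prems(1) unfolding unitary_def
    by (intro exI[of _ "1\<^sub>m n"]) (auto simp: diagonal_mat_of_def intro!: eq_matI)
next
  case (Cons e es n H)
  have H: "H \<in> carrier_mat n n" and cp: "char_poly H = [:-e,1:] * (\<Prod>e\<leftarrow>es. [:-e,1:])"
    using Cons by auto
  have "degree (char_poly H) \<noteq> 0"
    unfolding cp by (subst degree_mult_eq) (auto simp: monic_prod_list)
  then obtain m where n: "n = Suc m"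
    using degree_monic_char_poly[OF H] by (cases n) auto
  have "eigenvalue H e" unfolding eigenvalue_root_char_poly[OF H] cp by simp
  then obtain U B where U: "unitary n U" and B: "B \<in> carrier_mat m m" "mat_adjoint B = B"
    and UHU: "mat_adjoint U * H * U = four_block_mat (mat 1 1 (\<lambda>_. e)) (0\<^sub>m 1 m) (0\<^sub>m m 1) B"
    using hermitian_eigen_deflation[of H m e] Cons(3) H n by auto
  have "[:-e,1:] * char_poly B = [:-e,1:] * (\<Prod>e\<leftarrow>es. [:-e,1:])"
    using unitary_conjugate_char_poly[OF U H] unfolding UHU cp using B
    by (subst (asm) char_poly_four_block_zeros_col) (auto simp: char_poly_defs det_def sign_def)
  then have "char_poly B = (\<Prod>e\<leftarrow>es. [:-e,1:])"
    by (metis mult_cancel_left pCons_eq_0_iff zero_neq_one)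
  with Cons(1) B obtain V where V: "unitary m V" and BV: "B * V = V * diagonal_mat_of m es"
    by blast
  define W where "W = four_block_mat (1\<^sub>m 1) (0\<^sub>m 1 m) (0\<^sub>m m 1) V"
  have "unitary n (U * W)" unfolding W_def n using unitary_mult unitary_four_block[OF V] U n by blast
  moreover have "H * (U * W) = (U * W) * diagonal_mat_of n (e # es)"
    unfolding W_def n using unitary_diagonalization_step[OF U[unfolded n] H[unfolded n] UHU B(1) V BV] .
  ultimately show ?case by blast
qed

text \<open>\<open>\<phi> i u\<close> is the \<open>u\<close>-th coordinate of the \<open>i\<close>-th vector: the matrix \<open>(\<phi> i u)\<close> is unitary.\<close>

definition orthonormal_basis :: "nat \<Rightarrow> (nat \<Rightarrow> nat \<Rightarrow> complex) \<Rightarrow> bool" where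
  "orthonormal_basis n \<phi> \<longleftrightarrow>
     (\<forall>i<n. \<forall>j<n. (\<Sum>u<n. cnj (\<phi> i u) * \<phi> j u) = (if i = j then 1 else 0)) \<and>
     (\<forall>u<n. \<forall>w<n. (\<Sum>i<n. \<phi> i u * cnj (\<phi> i w)) = (if u = w then 1 else 0))"

lemma orthonormal_basis_norm:
  assumes "orthonormal_basis n \<phi>" "i < n"
  shows "(\<Sum>u<n. (cmod (\<phi> i u))\<^sup>2) = 1"
proof -
  have "complex_of_real (\<Sum>u<n. (cmod (\<phi> i u))\<^sup>2) = (\<Sum>u<n. cnj (\<phi> i u) * \<phi> i u)"
    by (simp add: cnj_mult_self)
  also have "\<dots> = 1" using assms unfolding orthonormal_basis_def by simp
  finally show ?thesis by (simp only: of_real_eq_1_iff)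
qed

lemma hermitian_eigenbasis:
  fixes H :: "complex mat"
  assumes H: "H \<in> carrier_mat n n" "mat_adjoint H = H" "char_poly H = (\<Prod>e\<leftarrow>es. [:-e,1:])"
  shows "\<exists>\<phi>. orthonormal_basis n \<phi>
    \<and> (\<forall>i<n. \<forall>u<n. (\<Sum>w<n. H $$ (u,w) * \<phi> i w) = es ! i * \<phi> i u)
    \<and> (\<forall>u<n. \<forall>w<n. H $$ (u,w) = (\<Sum>i<n. es ! i * \<phi> i u * cnj (\<phi> i w)))"
proof -
  obtain U where U: "unitary n U" and HU: "H * U = U * diagonal_mat_of n es"
    using hermitian_unitarily_diagonalizable[OF H] by blast
  have Uc: "U \<in> carrier_mat n n" using U by (rule unitary_carrier)
  define \<phi> where "\<phi> i u = U $$ (u,i)" for i u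
  have "(\<Sum>u<n. cnj (\<phi> i u) * \<phi> j u) = (mat_adjoint U * U) $$ (i,j)" if "i < n" "j < n" for i j
    using that Uc by (subst index_mult_mat_sum[of _ n n]) (auto simp: \<phi>_def)
  moreover have "(\<Sum>i<n. \<phi> i u * cnj (\<phi> i w)) = (U * mat_adjoint U) $$ (u,w)" if "u < n" "w < n" for u w
    using that Uc by (subst index_mult_mat_sum[of _ n n]) (auto simp: \<phi>_def)
  ultimately have basis: "orthonormal_basis n \<phi>"
    unfolding orthonormal_basis_def using unitary_left_inverse[OF U] unitary_right_inverse[OF U] by simp
  have eig: "(\<Sum>w<n. H $$ (u,w) * \<phi> i w) = es ! i * \<phi> i u" if "i < n" "u < n" for i u
  proof -
    have "(\<Sum>w<n. H $$ (u,w) * \<phi> i w) = (U * diagonal_mat_of n es) $$ (u,i)"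
      unfolding HU[symmetric] \<phi>_def using that Uc H by (subst index_mult_mat_sum[of _ n n _ n]) auto
    also have "\<dots> = (\<Sum>r<n. U $$ (u,r) * (if r = i then es ! r else 0))"
      using that Uc by (subst index_mult_mat_sum[of _ n n]) (auto simp: diagonal_mat_of_def intro!: sum.cong)
    finally show ?thesis using that by (simp add: \<phi>_def sum_mult_delta)
  qed
  have "H $$ (u,w) = (\<Sum>i<n. es ! i * \<phi> i u * cnj (\<phi> i w))" if "u < n" "w < n" for u w
  proof -
    have "H $$ (u,w) = (\<Sum>r<n. H $$ (u,r) * (if r = w then 1 else 0))"
      using that by (simp add: sum_mult_delta)
    also have "\<dots> = (\<Sum>r<n. H $$ (u,r) * (\<Sum>i<n. \<phi> i r * cnj (\<phi> i w)))"
      using basis that unfolding orthonormal_basis_def by (intro sum.cong) auto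
    also have "\<dots> = (\<Sum>i<n. (\<Sum>r<n. H $$ (u,r) * \<phi> i r) * cnj (\<phi> i w))"
      by (simp add: sum_distrib_left sum_distrib_right mult.assoc) (rule sum.swap)
    finally show ?thesis using eig that by simp
  qed
  then show ?thesis using basis eig by blast
qed

lemma hermitian_eigenvalue_real:
  fixes H :: "complex mat"
  assumes herm: "\<And>u w. u < n \<Longrightarrow> w < n \<Longrightarrow> cnj (H $$ (u,w)) = H $$ (w,u)"
    and unit: "(\<Sum>u<n. cnj (\<phi> u) * \<phi> u) = 1"
    and eigen: "\<And>u. u < n \<Longrightarrow> (\<Sum>w<n. H $$ (u,w) * \<phi> w) = e * \<phi> u"
  shows "cnj e = e"
proof -
  have "e = (\<Sum>u<n. cnj (\<phi> u) * (e * \<phi> u))"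
    using unit by (simp add: sum_distrib_left[symmetric] mult.left_commute[of "cnj _"])
  also have "\<dots> = (\<Sum>u<n. \<Sum>w<n. cnj (\<phi> u) * H $$ (u,w) * \<phi> w)"
    using eigen by (intro sum.cong refl) (simp flip: sum_distrib_left add: mult.assoc)
  finally have q: "e = (\<Sum>u<n. \<Sum>w<n. cnj (\<phi> u) * H $$ (u,w) * \<phi> w)" .
  have "cnj e = (\<Sum>u<n. \<Sum>w<n. \<phi> u * H $$ (w,u) * cnj (\<phi> w))"
    unfolding q using herm by (auto intro!: sum.cong)
  also have "\<dots> = e"
    unfolding q by (subst sum.swap) (auto simp: mult.commute intro!: sum.cong)
  finally show ?thesis .
qed

lemma linear_factors_mset_eq:
  assumes "(\<Prod>x\<leftarrow>xs. [:-x, 1:]) = (\<Prod>y\<leftarrow>ys. [:-y, 1:] :: real poly)"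
  shows "mset xs = mset ys"
proof (rule multiset_eqI)
  have order_prod: "order a (\<Prod>x\<leftarrow>zs. [:-x, 1:]) = count (mset zs) a" for a and zs :: "real list"
    by (subst order_prod_list) (auto simp: o_def, induct zs, auto simp: order_linear')
  show "count (mset xs) a = count (mset ys) a" for a
    using assms order_prod[of a xs] order_prod[of a ys] by simp
qed

lemma eigenvalues_asc_eqI:
  assumes "sorted es" "char_poly A = (\<Prod>e\<leftarrow>es. [:-e,1:])"
  shows "eigenvalues_asc A = es"
  unfolding eigenvalues_asc_def
proof (rule the_equality)
  fix es' assume "sorted es' \<and> char_poly A = (\<Prod>e\<leftarrow>es'. [:-e,1:])"
  then have "sort es = es'"
    using linear_factors_mset_eq[of es' es] assms(2) by (intro properties_for_sort) auto
  then show "es' = es" using assms(1) by (simp add: sorted_sort_id)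
qed (use assms in auto)

lemma real_symmetric_char_poly_splits:
  fixes A :: "real mat"
  assumes A: "A \<in> carrier_mat n n" and sym: "\<And>u w. u < n \<Longrightarrow> w < n \<Longrightarrow> A $$ (u,w) = A $$ (w,u)"
  shows "\<exists>rs. length rs = n \<and> char_poly A = (\<Prod>r\<leftarrow>rs. [:-r,1:])"
proof -
  interpret of_real_poly: map_poly_inj_comm_ring_hom "of_real :: real \<Rightarrow> complex" ..
  define AC where "AC = map_mat complex_of_real A"
  have AC: "AC \<in> carrier_mat n n" unfolding AC_def using A by auto
  have herm: "cnj (AC $$ (u,w)) = AC $$ (w,u)" if "u < n" "w < n" for u w
    using that A sym unfolding AC_def by auto
  then have "mat_adjoint AC = AC" using AC by (intro eq_matI) auto
  moreover obtain es where es: "char_poly AC = (\<Prod>e\<leftarrow>es. [:-e,1:])" "length es = n"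
    using char_poly_factorized[OF AC] by blast
  ultimately obtain \<phi> where basis: "orthonormal_basis n \<phi>"
    and eigen: "\<forall>i<n. \<forall>u<n. (\<Sum>w<n. AC $$ (u,w) * \<phi> i w) = es ! i * \<phi> i u"
    using hermitian_eigenbasis[OF AC] by blast
  have real: "cnj (es ! i) = es ! i" if "i < n" for i
    using basis eigen that unfolding orthonormal_basis_def
    by (intro hermitian_eigenvalue_real[OF herm, of n "\<phi> i"]) auto
  define rs where "rs = map Re es"
  then have "es = map complex_of_real rs"
    using real es(2) by (intro nth_equalityI) (auto simp: complex_eq_iff)
  have "map_poly complex_of_real (char_poly A) = char_poly AC"
    unfolding AC_def by (rule of_real_hom.char_poly_hom[OF A, symmetric])
  also have "\<dots> = (\<Prod>r\<leftarrow>rs. [:-complex_of_real r,1:])"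
    using es(1) \<open>es = map complex_of_real rs\<close> by (simp add: o_def)
  also have "\<dots> = map_poly complex_of_real (\<Prod>r\<leftarrow>rs. [:-r,1:])"
    by (simp add: of_real_poly.hom_prod_list o_def)
  finally have "char_poly A = (\<Prod>r\<leftarrow>rs. [:-r,1:])"
    unfolding of_real_poly.eq_iff .
  moreover have "length rs = n" using es(2) by (simp add: rs_def)
  ultimately show ?thesis by blast
qed

lemma real_symmetric_eigenbasis:
  fixes A :: "real mat"
  assumes A: "A \<in> carrier_mat n n" and sym: "\<And>u w. u < n \<Longrightarrow> w < n \<Longrightarrow> A $$ (u,w) = A $$ (w,u)"
  defines "\<mu> \<equiv> eigenvalues_asc A"
  shows "length \<mu> = n \<and> sorted \<mu> \<and> (\<exists>\<phi>. orthonormal_basis n \<phi> \<and>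
    (\<forall>u<n. \<forall>w<n. complex_of_real (A $$ (u,w)) = (\<Sum>i<n. complex_of_real (\<mu> ! i) * \<phi> i u * cnj (\<phi> i w))))"
proof -
  interpret of_real_poly: map_poly_comm_ring_hom "of_real :: real \<Rightarrow> complex" ..
  obtain rs where rs: "length rs = n" "char_poly A = (\<Prod>r\<leftarrow>rs. [:-r,1:])"
    using real_symmetric_char_poly_splits[OF A sym] by blast
  have sorted_rs: "char_poly A = (\<Prod>r\<leftarrow>sort rs. [:-r,1:])"
    unfolding rs(2) by (simp flip: prod_mset_prod_list)
  moreover have \<mu>: "\<mu> = sort rs"
    unfolding \<mu>_def by (rule eigenvalues_asc_eqI) (simp_all add: sorted_rs)
  ultimately have "char_poly A = (\<Prod>r\<leftarrow>\<mu>. [:-r,1:])" by simp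
  define AC where "AC = map_mat complex_of_real A"
  have AC: "AC \<in> carrier_mat n n" unfolding AC_def using A by auto
  have "mat_adjoint AC = AC" using AC A sym unfolding AC_def by (intro eq_matI) auto
  moreover have "char_poly AC = (\<Prod>r\<leftarrow>map complex_of_real \<mu>. [:-r,1:])"
    unfolding AC_def of_real_hom.char_poly_hom[OF A] \<open>char_poly A = (\<Prod>r\<leftarrow>\<mu>. [:-r,1:])\<close>
    by (simp add: of_real_poly.hom_prod_list o_def)
  ultimately obtain \<phi> where "orthonormal_basis n \<phi>"
    "\<forall>u<n. \<forall>w<n. AC $$ (u,w) = (\<Sum>i<n. map complex_of_real \<mu> ! i * \<phi> i u * cnj (\<phi> i w))"
    using hermitian_eigenbasis[OF AC] by blast
  moreover have "length \<mu> = n" using \<mu> rs(1) by simp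
  ultimately show ?thesis using \<mu> A unfolding AC_def by auto
qed

section \<open>Bessel's inequality and projective measurements\<close>

definition cinner :: "'i set \<Rightarrow> ('i \<Rightarrow> complex) \<Rightarrow> ('i \<Rightarrow> complex) \<Rightarrow> complex" where
  "cinner I f g = (\<Sum>p\<in>I. cnj (f p) * g p)"

lemma cinner_self: "cinner I f f = complex_of_real (\<Sum>p\<in>I. (cmod (f p))\<^sup>2)"
  unfolding cinner_def by (simp add: cnj_mult_self)

lemma cinner_commute: "cinner I g f = cnj (cinner I f g)"
  unfolding cinner_def by (simp add: mult.commute)

lemma cinner_diff_left: "cinner I (\<lambda>p. f p - g p) h = cinner I f h - cinner I g h"
  unfolding cinner_def by (simp add: algebra_simps sum_subtractf)

lemma cinner_diff_right: "cinner I h (\<lambda>p. f p - g p) = cinner I h f - cinner I h g"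
  unfolding cinner_def by (simp add: algebra_simps sum_subtractf)

lemma cinner_sum_left:
  "cinner I (\<lambda>p. \<Sum>x\<in>J. \<alpha> x * g x p) h = (\<Sum>x\<in>J. cnj (\<alpha> x) * cinner I (g x) h)"
  unfolding cinner_def by (simp add: sum_distrib_left sum_distrib_right mult_ac sum.swap[of _ I J])

lemma cinner_sum_right:
  "cinner I h (\<lambda>p. \<Sum>x\<in>J. \<alpha> x * g x p) = (\<Sum>x\<in>J. \<alpha> x * cinner I h (g x))"
  unfolding cinner_def by (simp add: sum_distrib_left sum_distrib_right mult_ac sum.swap[of _ I J])

lemma bessel_inequality:
  assumes J: "finite J"
    and orth: "\<And>x y. x \<in> J \<Longrightarrow> y \<in> J \<Longrightarrow> cinner I (g x) (g y) = (if x = y then 1 else 0)"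
  shows "(\<Sum>x\<in>J. (cmod (cinner I (g x) f))\<^sup>2) \<le> (\<Sum>p\<in>I. (cmod (f p))\<^sup>2)"
proof -
  define \<alpha> where "\<alpha> x = cinner I (g x) f" for x
  define P where "P p = (\<Sum>x\<in>J. \<alpha> x * g x p)" for p
  define S where "S = (\<Sum>x\<in>J. cnj (\<alpha> x) * \<alpha> x)"
  have PP: "cinner I P P = S"
  proof -
    have "cinner I P P = (\<Sum>x\<in>J. cnj (\<alpha> x) * (\<Sum>y\<in>J. \<alpha> y * (if x = y then 1 else 0)))"
      unfolding P_def cinner_sum_left cinner_sum_right using orth by (auto intro!: sum.cong)
    then show ?thesis unfolding S_def using J by (simp add: sum_mult_delta')
  qed
  have Pf: "cinner I P f = S"
    unfolding P_def cinner_sum_left S_def \<alpha>_def ..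
  have fP: "cinner I f P = S"
    unfolding P_def cinner_sum_right S_def \<alpha>_def
    by (simp add: cinner_commute[of I f "g _"] mult.commute)
  have S: "S = complex_of_real (\<Sum>x\<in>J. (cmod (\<alpha> x))\<^sup>2)"
    unfolding S_def by (simp add: cnj_mult_self)
  have "complex_of_real (\<Sum>p\<in>I. (cmod (f p - P p))\<^sup>2) = cinner I (\<lambda>p. f p - P p) (\<lambda>p. f p - P p)"
    by (rule cinner_self[symmetric])
  also have "\<dots> = cinner I f f - S"
    unfolding cinner_diff_left cinner_diff_right PP Pf fP by simp
  also have "\<dots> = complex_of_real ((\<Sum>p\<in>I. (cmod (f p))\<^sup>2) - (\<Sum>x\<in>J. (cmod (\<alpha> x))\<^sup>2))"
    unfolding S of_real_diff cinner_self ..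
  finally have "(\<Sum>p\<in>I. (cmod (f p - P p))\<^sup>2) = (\<Sum>p\<in>I. (cmod (f p))\<^sup>2) - (\<Sum>x\<in>J. (cmod (\<alpha> x))\<^sup>2)"
    by (simp only: of_real_eq_iff)
  moreover have "(\<Sum>p\<in>I. (cmod (f p - P p))\<^sup>2) \<ge> 0" by (auto intro: sum_nonneg)
  ultimately show ?thesis unfolding \<alpha>_def by linarith
qed

text \<open>\<open>p k\<close> is the matrix, in entries, of the \<open>k\<close>-th member of a family of orthogonal projectors
  on \<open>\<complex>\<^sup>d\<close> summing to the identity.\<close>

locale projective_measurement =
  fixes c d :: nat and p :: "nat \<Rightarrow> nat \<Rightarrow> nat \<Rightarrow> complex"
  assumes hermitian: "k < c \<Longrightarrow> s < d \<Longrightarrow> r < d \<Longrightarrow> cnj (p k s r) = p k r s"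
    and idempotent: "k < c \<Longrightarrow> s < d \<Longrightarrow> s' < d \<Longrightarrow> (\<Sum>r<d. p k s r * p k r s') = p k s s'"
    and sum_eq_id: "s < d \<Longrightarrow> s' < d \<Longrightarrow> (\<Sum>k<c. p k s s') = (if s = s' then 1 else 0)"
begin

lemma norm_sq_apply:
  assumes k: "k < c"
  shows "complex_of_real (\<Sum>a<d. (cmod (\<Sum>r<d. p k a r * x r))\<^sup>2)
       = (\<Sum>r<d. \<Sum>r'<d. cnj (x r) * p k r r' * x r')"
proof -
  have "complex_of_real (\<Sum>a<d. (cmod (\<Sum>r<d. p k a r * x r))\<^sup>2)
      = (\<Sum>a<d. \<Sum>r<d. \<Sum>r'<d. cnj (x r) * x r' * (cnj (p k a r) * p k a r'))"
    by (simp add: cnj_mult_self[symmetric] sum_product sum_distrib_left sum_distrib_right mult_ac)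
  also have "\<dots> = (\<Sum>r<d. \<Sum>r'<d. \<Sum>a<d. cnj (x r) * x r' * (cnj (p k a r) * p k a r'))"
    by (subst sum.swap, rule sum.cong[OF refl], rule sum.swap)
  also have "\<dots> = (\<Sum>r<d. \<Sum>r'<d. cnj (x r) * x r' * (\<Sum>a<d. p k r a * p k a r'))"
    using hermitian[OF k] by (auto simp: sum_distrib_left intro!: sum.cong)
  also have "\<dots> = (\<Sum>r<d. \<Sum>r'<d. cnj (x r) * p k r r' * x r')"
    using idempotent[OF k] by (auto simp: mult_ac intro!: sum.cong)
  finally show ?thesis .
qed

lemma sum_norm_sq_apply:
  "(\<Sum>k<c. \<Sum>a<d. (cmod (\<Sum>r<d. p k a r * x r))\<^sup>2) = (\<Sum>a<d. (cmod (x a))\<^sup>2)"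
proof -
  have "complex_of_real (\<Sum>k<c. \<Sum>a<d. (cmod (\<Sum>r<d. p k a r * x r))\<^sup>2)
      = (\<Sum>r<d. \<Sum>r'<d. cnj (x r) * (\<Sum>k<c. p k r r') * x r')"
    using norm_sq_apply by (simp add: sum_distrib_left sum_distrib_right sum.swap[of _ "{..<c}"])
  also have "\<dots> = (\<Sum>r<d. \<Sum>r'<d. cnj (x r) * x r' * (if r' = r then 1 else 0))"
    using sum_eq_id by (auto simp: mult_ac intro!: sum.cong)
  also have "\<dots> = complex_of_real (\<Sum>a<d. (cmod (x a))\<^sup>2)"
    by (simp add: sum_mult_delta cnj_mult_self)
  finally show ?thesis by (simp only: of_real_eq_iff)
qed

lemma mult_orthogonal:
  assumes kl: "k < c" "l < c" "k \<noteq> l" and s: "s < d" "s' < d"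
  shows "(\<Sum>r<d. p k s r * p l r s') = 0"
proof -
  \<comment> \<open>For a column \<open>x\<close> of \<open>p l\<close> we have \<open>p l x = x\<close>, so all other terms of
     \<open>\<Sum>m. \<parallel>p m x\<parallel>\<^sup>2 = \<parallel>x\<parallel>\<^sup>2\<close> vanish.\<close>
  define N where "N m = (\<Sum>a<d. (cmod (\<Sum>r<d. p m a r * p l r s'))\<^sup>2)" for m
  have "N l = (\<Sum>a<d. (cmod (p l a s'))\<^sup>2)"
    unfolding N_def using idempotent kl s by (auto intro!: sum.cong)
  then have "(\<Sum>m<c. N m) = N l"
    unfolding N_def using sum_norm_sq_apply by simp
  also have "(\<Sum>m<c. N m) = N l + (\<Sum>m\<in>{..<c} - {l}. N m)"
    using kl by (subst sum.remove[of _ l]) auto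
  finally have "(\<Sum>m\<in>{..<c} - {l}. N m) = 0" by simp
  moreover have "N m \<ge> 0" for m unfolding N_def by (auto intro: sum_nonneg)
  ultimately have "N k = 0" using kl by (simp add: sum_nonneg_eq_0_iff)
  then have "(cmod (\<Sum>r<d. p k s r * p l r s'))\<^sup>2 = 0"
    unfolding N_def using s by (simp add: sum_nonneg_eq_0_iff)
  then show ?thesis by simp
qed

end

section \<open>An isotropic orthonormal family from a quantum coloring\<close>

text \<open>\<open>p u k\<close> is the projector of color \<open>k\<close> at vertex \<open>u\<close>, and \<open>a\<close> is a weighted adjacency
  matrix.\<close>

locale coloring_measurements =
  fixes n c d :: nat and p :: "nat \<Rightarrow> nat \<Rightarrow> nat \<Rightarrow> nat \<Rightarrow> complex" and a :: "nat \<Rightarrow> nat \<Rightarrow> complex"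
  assumes measurement: "u < n \<Longrightarrow> projective_measurement c d (p u)"
    and edge_orthogonal: "u < n \<Longrightarrow> w < n \<Longrightarrow> a u w \<noteq> 0 \<Longrightarrow> k < c \<Longrightarrow> s < d \<Longrightarrow> s' < d \<Longrightarrow>
      (\<Sum>r<d. p u k s r * p w k r s') = 0"
begin

lemma hermitian: "u < n \<Longrightarrow> k < c \<Longrightarrow> s < d \<Longrightarrow> r < d \<Longrightarrow> cnj (p u k s r) = p u k r s"
  using measurement projective_measurement.hermitian by blast

lemma idempotent: "u < n \<Longrightarrow> k < c \<Longrightarrow> s < d \<Longrightarrow> s' < d \<Longrightarrow> (\<Sum>r<d. p u k s r * p u k r s') = p u k s s'"
  using measurement projective_measurement.idempotent by blast

lemma sum_eq_id: "u < n \<Longrightarrow> s < d \<Longrightarrow> s' < d \<Longrightarrow> (\<Sum>k<c. p u k s s') = (if s = s' then 1 else 0)"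
  using measurement projective_measurement.sum_eq_id by blast

lemma mult_orthogonal:
  "u < n \<Longrightarrow> k < c \<Longrightarrow> l < c \<Longrightarrow> k \<noteq> l \<Longrightarrow> s < d \<Longrightarrow> s' < d \<Longrightarrow> (\<Sum>r<d. p u k s r * p u l r s') = 0"
  using measurement projective_measurement.mult_orthogonal by blast

lemma cinner_apply:
  assumes "u < n" "k < c"
  shows "(\<Sum>r<d. cnj (\<Sum>s<d. p u k r s * x s) * (\<Sum>s<d. p w l r s * y s))
       = (\<Sum>s<d. \<Sum>s'<d. cnj (x s) * (\<Sum>r<d. p u k s r * p w l r s') * y s')"
proof -
  have "(\<Sum>r<d. cnj (\<Sum>s<d. p u k r s * x s) * (\<Sum>s<d. p w l r s * y s))
      = (\<Sum>r<d. (\<Sum>s<d. p u k s r * cnj (x s)) * (\<Sum>s<d. p w l r s * y s))"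
    using hermitian[OF assms] by (auto intro!: sum.cong)
  also have "\<dots> = (\<Sum>r<d. \<Sum>s<d. \<Sum>s'<d. cnj (x s) * (p u k s r * p w l r s') * y s')"
    by (rule sum.cong[OF refl], subst sum_product, intro sum.cong refl, simp add: mult_ac)
  also have "\<dots> = (\<Sum>s<d. \<Sum>s'<d. \<Sum>r<d. cnj (x s) * (p u k s r * p w l r s') * y s')"
    by (subst sum.swap, rule sum.cong[OF refl], rule sum.swap)
  finally show ?thesis by (simp add: sum_distrib_left sum_distrib_right)
qed

definition averaged_projector :: "(nat \<Rightarrow> complex) \<Rightarrow> nat \<Rightarrow> complex mat" where
  "averaged_projector v k = mat d d (\<lambda>(s,s'). \<Sum>u<n. complex_of_real ((cmod (v u))\<^sup>2) * p u k s s')"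

lemma averaged_projector_index:
  "s < d \<Longrightarrow> s' < d \<Longrightarrow> averaged_projector v k $$ (s,s') = (\<Sum>u<n. complex_of_real ((cmod (v u))\<^sup>2) * p u k s s')"
  by (simp add: averaged_projector_def)

lemma averaged_projector_eigenbasis:
  assumes k: "k < c"
  shows "\<exists>es \<psi>. orthonormal_basis d \<psi>
    \<and> (\<forall>i<d. \<forall>s<d. (\<Sum>s'<d. averaged_projector v k $$ (s,s') * \<psi> i s') = es ! i * \<psi> i s)
    \<and> (\<forall>s<d. \<forall>s'<d. averaged_projector v k $$ (s,s') = (\<Sum>i<d. es ! i * \<psi> i s * cnj (\<psi> i s')))"
proof -
  let ?R = "averaged_projector v k"
  have R: "?R \<in> carrier_mat d d" unfolding averaged_projector_def by auto
  have "mat_adjoint ?R = ?R"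
    by (rule eq_matI) (use R hermitian k in \<open>auto simp: averaged_projector_def intro!: sum.cong\<close>)
  moreover obtain es where "char_poly ?R = (\<Prod>e\<leftarrow>es. [:-e,1:])"
    using char_poly_factorized[OF R] by blast
  ultimately show ?thesis using hermitian_eigenbasis[OF R] by blast
qed

end

locale coloring_eigendata = coloring_measurements +
  fixes v :: "nat \<Rightarrow> complex" and es :: "nat \<Rightarrow> complex list" and \<psi> :: "nat \<Rightarrow> nat \<Rightarrow> nat \<Rightarrow> complex"
  assumes v_unit: "(\<Sum>u<n. (cmod (v u))\<^sup>2) = 1"
    and eigenbasis: "k < c \<Longrightarrow> orthonormal_basis d (\<psi> k)"
    and eigenvector: "k < c \<Longrightarrow> i < d \<Longrightarrow> s < d \<Longrightarrow>
      (\<Sum>s'<d. averaged_projector v k $$ (s,s') * \<psi> k i s') = es k ! i * \<psi> k i s"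
    and eigen_decomposition: "k < c \<Longrightarrow> s < d \<Longrightarrow> s' < d \<Longrightarrow>
      averaged_projector v k $$ (s,s') = (\<Sum>i<d. es k ! i * \<psi> k i s * cnj (\<psi> k i s'))"
begin

definition proj_eigvec :: "nat \<Rightarrow> nat \<Rightarrow> nat \<Rightarrow> nat \<Rightarrow> complex" where
  "proj_eigvec u k j r = (\<Sum>s<d. p u k r s * \<psi> k j s)"

definition eig_weight :: "nat \<Rightarrow> nat \<Rightarrow> real" where
  "eig_weight k j = (\<Sum>u<n. (cmod (v u))\<^sup>2 * (\<Sum>r<d. (cmod (proj_eigvec u k j r))\<^sup>2))"

definition support :: "(nat \<times> nat) set" where
  "support = {(k,j). k < c \<and> j < d \<and> eig_weight k j \<noteq> 0}"

definition family :: "nat \<times> nat \<Rightarrow> nat \<times> nat \<Rightarrow> complex" where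
  "family x q = (case x of (k,j) \<Rightarrow> case q of (u,s) \<Rightarrow>
     complex_of_real (1 / sqrt (eig_weight k j)) * v u * proj_eigvec u k j s)"

lemma family_apply:
  "family (k,j) (u,s) = complex_of_real (1 / sqrt (eig_weight k j)) * v u * proj_eigvec u k j s"
  by (simp add: family_def)

lemma weighted_gram:
  assumes k: "k < c" and j: "j < d" "j' < d"
  shows "(\<Sum>u<n. complex_of_real ((cmod (v u))\<^sup>2) * (\<Sum>r<d. cnj (proj_eigvec u k j r) * proj_eigvec u k j' r))
       = (if j = j' then es k ! j' else 0)"
proof -
  have "(\<Sum>u<n. complex_of_real ((cmod (v u))\<^sup>2) * (\<Sum>r<d. cnj (proj_eigvec u k j r) * proj_eigvec u k j' r))
      = (\<Sum>u<n. complex_of_real ((cmod (v u))\<^sup>2) * (\<Sum>s<d. \<Sum>s'<d. cnj (\<psi> k j s) * p u k s s' * \<psi> k j' s'))"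
    unfolding proj_eigvec_def using cinner_apply idempotent k by (auto intro!: sum.cong)
  also have "\<dots> = (\<Sum>s<d. cnj (\<psi> k j s) * (\<Sum>s'<d. averaged_projector v k $$ (s,s') * \<psi> k j' s'))"
    by (simp add: averaged_projector_index sum_distrib_left sum_distrib_right sum.swap[of _ "{..<n}"] mult_ac)
  also have "\<dots> = es k ! j' * (\<Sum>s<d. cnj (\<psi> k j s) * \<psi> k j' s)"
    using eigenvector[OF k j(2)] by (simp add: sum_distrib_left mult_ac)
  finally show ?thesis using eigenbasis[OF k] j unfolding orthonormal_basis_def by simp
qed

lemma eigenvalue_eq_weight: "k < c \<Longrightarrow> j < d \<Longrightarrow> es k ! j = complex_of_real (eig_weight k j)"
  using weighted_gram[of k j j] by (simp add: eig_weight_def cnj_mult_self)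

lemma eig_weight_nonneg: "eig_weight k j \<ge> 0"
  unfolding eig_weight_def by (auto intro!: sum_nonneg mult_nonneg_nonneg)

lemma support_subset: "support \<subseteq> {..<c} \<times> {..<d}"
  unfolding support_def by auto

lemma support_finite: "finite support"
  using support_subset by (rule finite_subset) auto

lemma card_support: "card support \<le> c * d"
  using card_mono[OF _ support_subset] by (simp add: card_cartesian_product)

lemma normaliser_sq:
  assumes "(k,j) \<in> support"
  shows "complex_of_real (1 / sqrt (eig_weight k j)) * complex_of_real (1 / sqrt (eig_weight k j))
         * complex_of_real (eig_weight k j) = 1"
proof -
  have "eig_weight k j > 0" using assms eig_weight_nonneg[of k j] unfolding support_def by auto
  then show ?thesis by (simp flip: of_real_mult add: field_simps)
qed

lemma cinner_family:
  "cinner ({..<n} \<times> {..<d}) (family (k,j)) (family (l,j'))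
     = complex_of_real (1 / sqrt (eig_weight k j)) * complex_of_real (1 / sqrt (eig_weight l j'))
       * (\<Sum>u<n. complex_of_real ((cmod (v u))\<^sup>2) * (\<Sum>s<d. cnj (proj_eigvec u k j s) * proj_eigvec u l j' s))"
proof -
  have pt: "cnj (family (k,j) (u,s)) * family (l,j') (u,s)
      = complex_of_real (1 / sqrt (eig_weight k j)) * complex_of_real (1 / sqrt (eig_weight l j'))
        * (complex_of_real ((cmod (v u))\<^sup>2) * (cnj (proj_eigvec u k j s) * proj_eigvec u l j' s))" for u s
    unfolding family_apply complex_norm_square by (simp add: mult_ac)
  have "cinner ({..<n} \<times> {..<d}) (family (k,j)) (family (l,j'))
      = (\<Sum>u<n. \<Sum>s<d. cnj (family (k,j) (u,s)) * family (l,j') (u,s))"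
    unfolding cinner_def by (simp add: sum.cartesian_product split_def)
  then show ?thesis unfolding pt by (simp add: sum_distrib_left)
qed

lemma family_orthonormal:
  assumes x: "x \<in> support" and y: "y \<in> support"
  shows "cinner ({..<n} \<times> {..<d}) (family x) (family y) = (if x = y then 1 else 0)"
proof -
  obtain k j l j' where xy: "x = (k,j)" "y = (l,j')" by (cases x, cases y)
  have k: "k < c" "j < d" and l: "l < c" "j' < d" using x y xy unfolding support_def by auto
  show ?thesis
  proof (cases "k = l")
    case True
    then show ?thesis
      using cinner_family[of k j l j'] weighted_gram[OF k l(2)]
        normaliser_sq[OF x[unfolded xy]] eigenvalue_eq_weight[OF k] xy by auto
  next
    case False
    have "(\<Sum>s<d. cnj (proj_eigvec u k j s) * proj_eigvec u l j' s) = 0" if u: "u < n" for u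
      unfolding proj_eigvec_def cinner_apply[OF u k(1)]
      using mult_orthogonal[OF u k(1) l(1) False] by simp
    then show ?thesis using cinner_family[of k j l j'] False xy by simp
  qed
qed

lemma family_isotropic:
  assumes x: "x \<in> support"
  shows "(\<Sum>s<d. \<Sum>u<n. \<Sum>w<n. cnj (family x (u,s)) * a u w * family x (w,s)) = 0"
proof -
  obtain k j where xkj: "x = (k,j)" by (cases x)
  have k: "k < c" using x xkj unfolding support_def by auto
  have "(\<Sum>s<d. cnj (proj_eigvec u k j s) * proj_eigvec w k j s) = 0"
    if "u < n" "w < n" "a u w \<noteq> 0" for u w
    unfolding proj_eigvec_def cinner_apply[OF that(1) k] using edge_orthogonal[OF that k] by simp
  then have "(\<Sum>u<n. \<Sum>w<n. cnj (v u) * a u w * v w * (\<Sum>s<d. cnj (proj_eigvec u k j s) * proj_eigvec w k j s)) = 0"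
    by (intro sum.neutral ballI) auto
  moreover have "cnj (family (k,j) (u,s)) * a u w * family (k,j) (w,s)
      = complex_of_real (1 / sqrt (eig_weight k j)) * complex_of_real (1 / sqrt (eig_weight k j))
        * (cnj (v u) * a u w * v w * (cnj (proj_eigvec u k j s) * proj_eigvec w k j s))" for u w s
    unfolding family_apply by (simp add: mult_ac)
  moreover have "(\<Sum>s<d. \<Sum>u<n. \<Sum>w<n. f u w s) = (\<Sum>u<n. \<Sum>w<n. \<Sum>s<d. f u w s)"
    for f :: "nat \<Rightarrow> nat \<Rightarrow> nat \<Rightarrow> complex"
    by (subst sum.swap) (rule sum.cong[OF refl], rule sum.swap)
  ultimately show ?thesis
    unfolding xkj by (simp add: sum_distrib_left flip: sum_divide_distrib)
qed

lemma family_coefficient: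
  assumes k: "k < c" "j < d" and s: "s < d"
  shows "(\<Sum>u<n. cnj (family (k,j) (u,s)) * v u)
       = complex_of_real (1 / sqrt (eig_weight k j)) * complex_of_real (eig_weight k j) * cnj (\<psi> k j s)"
proof -
  have "(\<Sum>u<n. cnj (family (k,j) (u,s)) * v u)
      = complex_of_real (1 / sqrt (eig_weight k j)) * (\<Sum>u<n. complex_of_real ((cmod (v u))\<^sup>2) * cnj (proj_eigvec u k j s))"
    unfolding family_apply complex_norm_square by (simp add: sum_distrib_left mult_ac)
  also have "(\<Sum>u<n. complex_of_real ((cmod (v u))\<^sup>2) * cnj (proj_eigvec u k j s))
      = cnj (\<Sum>s'<d. averaged_projector v k $$ (s,s') * \<psi> k j s')"
    unfolding proj_eigvec_def using s
    by (simp add: averaged_projector_index sum_distrib_left sum_distrib_right sum.swap[of _ "{..<n}"] mult_ac)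
  also have "\<dots> = complex_of_real (eig_weight k j) * cnj (\<psi> k j s)"
    using eigenvector[OF k s] eigenvalue_eq_weight[OF k] by simp
  finally show ?thesis by simp
qed

lemma family_coefficient_norm:
  assumes x: "(k,j) \<in> support" and s: "s < d"
  shows "(cmod (\<Sum>u<n. cnj (family (k,j) (u,s)) * v u))\<^sup>2 = eig_weight k j * (cmod (\<psi> k j s))\<^sup>2"
proof -
  have k: "k < c" "j < d" and pos: "eig_weight k j > 0"
    using x eig_weight_nonneg[of k j] unfolding support_def by auto
  have "1 / sqrt (eig_weight k j) * eig_weight k j = sqrt (eig_weight k j)"
    using pos real_div_sqrt[of "eig_weight k j"] by simp
  then have "complex_of_real (1 / sqrt (eig_weight k j)) * complex_of_real (eig_weight k j)
      = complex_of_real (sqrt (eig_weight k j))"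
    by (metis of_real_mult)
  then show ?thesis
    using pos unfolding family_coefficient[OF k s] by (simp add: norm_mult power_mult_distrib)
qed

lemma sum_averaged_projector_diag:
  assumes s: "s < d"
  shows "(\<Sum>k<c. averaged_projector v k $$ (s,s)) = 1"
proof -
  have "(\<Sum>k<c. averaged_projector v k $$ (s,s)) = (\<Sum>u<n. complex_of_real ((cmod (v u))\<^sup>2) * (\<Sum>k<c. p u k s s))"
    using s by (simp add: averaged_projector_index sum_distrib_left sum.swap[of _ "{..<c}"])
  also have "\<dots> = complex_of_real (\<Sum>u<n. (cmod (v u))\<^sup>2)"
    using sum_eq_id s by simp
  finally show ?thesis using v_unit by simp
qed

lemma family_covers:
  assumes s: "s < d"
  shows "(\<Sum>x\<in>support. (cmod (\<Sum>u<n. cnj (family x (u,s)) * v u))\<^sup>2) = 1"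
proof -
  have "(\<Sum>x\<in>support. (cmod (\<Sum>u<n. cnj (family x (u,s)) * v u))\<^sup>2)
      = (\<Sum>(k,j)\<in>support. eig_weight k j * (cmod (\<psi> k j s))\<^sup>2)"
  proof (rule sum.cong[OF refl])
    fix x assume x: "x \<in> support"
    obtain k j where xkj: "x = (k,j)" by (cases x)
    show "(cmod (\<Sum>u<n. cnj (family x (u,s)) * v u))\<^sup>2 = (case x of (k,j) \<Rightarrow> eig_weight k j * (cmod (\<psi> k j s))\<^sup>2)"
      unfolding xkj prod.case using x xkj by (intro family_coefficient_norm[OF _ s]) simp
  qed
  also have "\<dots> = (\<Sum>(k,j)\<in>{..<c} \<times> {..<d}. eig_weight k j * (cmod (\<psi> k j s))\<^sup>2)"
  proof (rule sum.mono_neutral_left)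
    show "\<forall>x\<in>{..<c} \<times> {..<d} - support. (case x of (k,j) \<Rightarrow> eig_weight k j * (cmod (\<psi> k j s))\<^sup>2) = 0"
      unfolding support_def by auto
  qed (use support_subset in auto)
  also have "\<dots> = (\<Sum>k<c. \<Sum>j<d. eig_weight k j * (cmod (\<psi> k j s))\<^sup>2)"
    by (simp add: sum.cartesian_product)
  also have "\<dots> = 1"
  proof -
    have "complex_of_real (\<Sum>k<c. \<Sum>j<d. eig_weight k j * (cmod (\<psi> k j s))\<^sup>2)
        = (\<Sum>k<c. averaged_projector v k $$ (s,s))"
      unfolding of_real_sum
    proof (rule sum.cong[OF refl])
      fix k assume "k \<in> {..<c}"
      then have k: "k < c" by simp
      have "averaged_projector v k $$ (s,s) = (\<Sum>j<d. es k ! j * (\<psi> k j s * cnj (\<psi> k j s)))"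
        using eigen_decomposition[OF k s s] by (simp add: mult.assoc)
      also have "\<dots> = (\<Sum>j<d. complex_of_real (eig_weight k j * (cmod (\<psi> k j s))\<^sup>2))"
        using eigenvalue_eq_weight[OF k] by (intro sum.cong) (simp_all add: mult_cnj_self)
      finally show "(\<Sum>j<d. complex_of_real (eig_weight k j * (cmod (\<psi> k j s))\<^sup>2))
          = averaged_projector v k $$ (s,s)" by simp
    qed
    then show ?thesis using sum_averaged_projector_diag[OF s] by (simp only: of_real_eq_1_iff)
  qed
  finally show ?thesis .
qed

end

lemma (in coloring_measurements) isotropic_orthonormal_family:
  assumes v_unit: "(\<Sum>u<n. (cmod (v u))\<^sup>2) = 1"
  shows "\<exists>J (g :: nat \<times> nat \<Rightarrow> nat \<times> nat \<Rightarrow> complex). finite J \<and> card J \<le> c * d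
    \<and> (\<forall>x\<in>J. \<forall>y\<in>J. cinner ({..<n} \<times> {..<d}) (g x) (g y) = (if x = y then 1 else 0))
    \<and> (\<forall>x\<in>J. (\<Sum>s<d. \<Sum>u<n. \<Sum>w<n. cnj (g x (u,s)) * a u w * g x (w,s)) = 0)
    \<and> (\<forall>s<d. (\<Sum>x\<in>J. (cmod (\<Sum>u<n. cnj (g x (u,s)) * v u))\<^sup>2) = 1)"
proof -
  define eigendata where "eigendata k z \<longleftrightarrow> orthonormal_basis d (snd z)
    \<and> (\<forall>i<d. \<forall>s<d. (\<Sum>s'<d. averaged_projector v k $$ (s,s') * snd z i s') = fst z ! i * snd z i s)
    \<and> (\<forall>s<d. \<forall>s'<d. averaged_projector v k $$ (s,s') = (\<Sum>i<d. fst z ! i * snd z i s * cnj (snd z i s')))"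
    for k and z :: "complex list \<times> (nat \<Rightarrow> nat \<Rightarrow> complex)"
  have "\<forall>k. \<exists>z. k < c \<longrightarrow> eigendata k z"
    using averaged_projector_eigenbasis unfolding eigendata_def by fastforce
  from choice[OF this] obtain z where z: "\<forall>k. k < c \<longrightarrow> eigendata k (z k)"
    by blast
  interpret coloring_eigendata n c d p a v "\<lambda>k. fst (z k)" "\<lambda>k. snd (z k)"
    by (rule coloring_eigendata.intro[OF coloring_measurements_axioms], unfold_locales)
      (use v_unit z in \<open>auto simp: eigendata_def\<close>)
  show ?thesis
    by (intro exI[of _ support] exI[of _ family] conjI ballI allI impI support_finite card_support
        family_orthonormal family_isotropic family_covers)
qed

section \<open>Spectral weights\<close>

lemma eigen_expansion_quadratic_form:
  fixes \<phi> :: "nat \<Rightarrow> nat \<Rightarrow> complex" and h :: "nat \<Rightarrow> complex"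
  assumes K: "\<And>u w. u < n \<Longrightarrow> w < n \<Longrightarrow> K u w = (\<Sum>i<n. m i * \<phi> i u * cnj (\<phi> i w))"
  shows "(\<Sum>i<n. m i * (complex_of_real (cmod (\<Sum>u<n. cnj (h u) * \<phi> i u)))\<^sup>2)
       = (\<Sum>u<n. \<Sum>w<n. cnj (h u) * K u w * h w)"
proof -
  have "(\<Sum>i<n. m i * (complex_of_real (cmod (\<Sum>u<n. cnj (h u) * \<phi> i u)))\<^sup>2)
      = (\<Sum>i<n. \<Sum>u<n. \<Sum>w<n. cnj (h u) * (m i * \<phi> i u * cnj (\<phi> i w)) * h w)"
    by (simp add: mult_cnj_self[symmetric] sum_product sum_distrib_left mult_ac)
  also have "\<dots> = (\<Sum>u<n. \<Sum>w<n. \<Sum>i<n. cnj (h u) * (m i * \<phi> i u * cnj (\<phi> i w)) * h w)"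
    by (subst sum.swap, rule sum.cong[OF refl], rule sum.swap)
  also have "\<dots> = (\<Sum>u<n. \<Sum>w<n. cnj (h u) * K u w * h w)"
    using K by (auto simp: sum_distrib_left sum_distrib_right intro!: sum.cong)
  finally show ?thesis .
qed

lemma parseval:
  assumes "orthonormal_basis n \<phi>"
  shows "(\<Sum>i<n. (cmod (\<Sum>u<n. cnj (h u) * \<phi> i u))\<^sup>2) = (\<Sum>u<n. (cmod (h u))\<^sup>2)"
proof -
  have "complex_of_real (\<Sum>i<n. (cmod (\<Sum>u<n. cnj (h u) * \<phi> i u))\<^sup>2)
      = (\<Sum>u<n. \<Sum>w<n. cnj (h u) * (if u = w then 1 else 0) * h w)"
    using eigen_expansion_quadratic_form[of n "\<lambda>u w. if u = w then 1 else 0" "\<lambda>_. 1" \<phi> h] assms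
    unfolding orthonormal_basis_def by simp
  also have "\<dots> = complex_of_real (\<Sum>u<n. (cmod (h u))\<^sup>2)"
    by (simp add: cnj_mult_self if_distrib[of "\<lambda>z. _ * z * _"] cong: if_cong)
  finally show ?thesis by (simp only: of_real_eq_iff)
qed

lemma coefficient_bessel_bound:
  fixes f :: "nat \<Rightarrow> complex" and g :: "'j \<Rightarrow> nat \<times> nat \<Rightarrow> complex"
  assumes J: "finite J" and s: "s < d"
    and orth: "\<And>x y. x \<in> J \<Longrightarrow> y \<in> J \<Longrightarrow> cinner ({..<n} \<times> {..<d}) (g x) (g y) = (if x = y then 1 else 0)"
    and f: "(\<Sum>u<n. (cmod (f u))\<^sup>2) = 1"
  shows "(\<Sum>x\<in>J. (cmod (\<Sum>u<n. cnj (g x (u,s)) * f u))\<^sup>2) \<le> 1"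
proof -
  define F where "F q = (case q of (u,s') \<Rightarrow> if s' = s then f u else 0)" for q :: "nat \<times> nat"
  have "cinner ({..<n} \<times> {..<d}) (g x) F = (\<Sum>u<n. \<Sum>s'<d. cnj (g x (u,s')) * (if s' = s then f u else 0))" for x
    unfolding cinner_def F_def by (simp add: sum.cartesian_product split_def)
  also have "(\<Sum>u<n. \<Sum>s'<d. cnj (g x (u,s')) * (if s' = s then f u else 0)) = (\<Sum>u<n. cnj (g x (u,s)) * f u)" for x
    using s by (simp add: sum_mult_delta)
  moreover have "(\<Sum>q\<in>{..<n} \<times> {..<d}. (cmod (F q))\<^sup>2) = (\<Sum>u<n. \<Sum>s'<d. (cmod (if s' = s then f u else 0))\<^sup>2)"
    unfolding F_def by (simp add: sum.cartesian_product split_def)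
  moreover have "\<dots> = 1"
    using s f by (simp add: if_distrib[of "\<lambda>z. (cmod z)\<^sup>2"] cong: if_cong)
  ultimately show ?thesis using bessel_inequality[OF J orth, of F] by simp
qed

lemma unit_cinner_sum:
  assumes "cinner ({..<n} \<times> {..<d}) f f = 1"
  shows "(\<Sum>s<d. \<Sum>u<n. (cmod (f (u,s)))\<^sup>2) = 1"
proof -
  have "complex_of_real (\<Sum>q\<in>{..<n} \<times> {..<d}. (cmod (f q))\<^sup>2) = 1"
    using assms unfolding cinner_self .
  then have "(\<Sum>q\<in>{..<n} \<times> {..<d}. (cmod (f q))\<^sup>2) = 1"
    by (simp only: of_real_eq_1_iff)
  moreover have "(\<Sum>u<n. \<Sum>s<d. (cmod (f (u,s)))\<^sup>2) = (\<Sum>q\<in>{..<n} \<times> {..<d}. (cmod (f q))\<^sup>2)"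
    by (simp add: sum.cartesian_product split_def)
  ultimately show ?thesis by (simp add: sum.swap[of _ "{..<d}"])
qed

lemma isotropic_eigen_sum:
  fixes \<mu> :: "nat \<Rightarrow> real"
  assumes spec: "\<And>u w. u < n \<Longrightarrow> w < n \<Longrightarrow> a u w = (\<Sum>i<n. complex_of_real (\<mu> i) * \<phi> i u * cnj (\<phi> i w))"
    and isotropic: "(\<Sum>s<d. \<Sum>u<n. \<Sum>w<n. cnj (h (u,s)) * a u w * h (w,s)) = 0"
  shows "(\<Sum>s<d. \<Sum>i<n. \<mu> i * (cmod (\<Sum>u<n. cnj (h (u,s)) * \<phi> i u))\<^sup>2) = 0"
proof -
  have quadratic: "complex_of_real (\<Sum>i<n. \<mu> i * (cmod (\<Sum>u<n. cnj (h (u,s)) * \<phi> i u))\<^sup>2)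
      = (\<Sum>u<n. \<Sum>w<n. cnj (h (u,s)) * a u w * h (w,s))" for s
    using eigen_expansion_quadratic_form[of n a "\<lambda>i. complex_of_real (\<mu> i)" \<phi>] spec by simp
  have "complex_of_real (\<Sum>s<d. \<Sum>i<n. \<mu> i * (cmod (\<Sum>u<n. cnj (h (u,s)) * \<phi> i u))\<^sup>2)
      = (\<Sum>s<d. complex_of_real (\<Sum>i<n. \<mu> i * (cmod (\<Sum>u<n. cnj (h (u,s)) * \<phi> i u))\<^sup>2))"
    by (rule of_real_sum)
  also have "\<dots> = 0" unfolding quadratic by (rule isotropic)
  finally show ?thesis by (simp only: of_real_eq_0_iff)
qed

lemma spectral_weights_of_isotropic_family:
  fixes \<phi> :: "nat \<Rightarrow> nat \<Rightarrow> complex" and \<mu> :: "nat \<Rightarrow> real" and a :: "nat \<Rightarrow> nat \<Rightarrow> complex"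
    and g :: "'j \<Rightarrow> nat \<times> nat \<Rightarrow> complex"
  assumes basis: "orthonormal_basis n \<phi>"
    and spec: "\<And>u w. u < n \<Longrightarrow> w < n \<Longrightarrow> a u w = (\<Sum>i<n. complex_of_real (\<mu> i) * \<phi> i u * cnj (\<phi> i w))"
    and J: "finite J" "card J \<le> c * d" and d: "d > 0" and t: "t < n"
    and orth: "\<And>x y. x \<in> J \<Longrightarrow> y \<in> J \<Longrightarrow> cinner ({..<n} \<times> {..<d}) (g x) (g y) = (if x = y then 1 else 0)"
    and isotropic: "\<And>x. x \<in> J \<Longrightarrow> (\<Sum>s<d. \<Sum>u<n. \<Sum>w<n. cnj (g x (u,s)) * a u w * g x (w,s)) = 0"
    and covers: "\<And>s. s < d \<Longrightarrow> (\<Sum>x\<in>J. (cmod (\<Sum>u<n. cnj (g x (u,s)) * \<phi> t u))\<^sup>2) = 1"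
  shows "\<exists>w. (\<forall>i<n. 0 \<le> w i \<and> w i \<le> 1) \<and> w t = 1 \<and> (\<Sum>i<n. w i) \<le> real c \<and> (\<Sum>i<n. w i * \<mu> i) = 0"
proof -
  \<comment> \<open>\<open>w i\<close> averages over \<open>s\<close> the squared norm of the projection of \<open>\<phi> i \<otimes> e\<^sub>s\<close> onto the family.\<close>
  define X where "X x s i = (cmod (\<Sum>u<n. cnj (g x (u,s)) * \<phi> i u))\<^sup>2" for x s i
  define w where "w i = (\<Sum>s<d. \<Sum>x\<in>J. X x s i) / real d" for i
  have swap: "(\<Sum>i<n. \<Sum>s<d. \<Sum>x\<in>J. f x s i) = (\<Sum>x\<in>J. \<Sum>s<d. \<Sum>i<n. f x s i)" for f :: "_ \<Rightarrow> _ \<Rightarrow> _ \<Rightarrow> real"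
    by (simp add: sum.swap[of _ "{..<n}"] sum.swap[of _ "{..<d}" J])
  have "0 \<le> w i \<and> w i \<le> 1" if i: "i < n" for i
  proof
    show "0 \<le> w i" unfolding w_def X_def by (auto intro!: sum_nonneg divide_nonneg_nonneg)
    have "(\<Sum>s<d. \<Sum>x\<in>J. X x s i) \<le> (\<Sum>s<d. 1)"
      unfolding X_def using coefficient_bessel_bound[OF J(1) _ orth] orthonormal_basis_norm[OF basis i]
      by (intro sum_mono) auto
    then show "w i \<le> 1" unfolding w_def using d by simp
  qed
  moreover have "w t = 1" unfolding w_def X_def using covers d by simp
  moreover have "(\<Sum>i<n. w i) \<le> real c"
  proof -
    have "(\<Sum>s<d. \<Sum>u<n. (cmod (g x (u,s)))\<^sup>2) = 1" if "x \<in> J" for x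
      using orth[OF that that] by (intro unit_cinner_sum) simp
    then have "(\<Sum>x\<in>J. \<Sum>s<d. \<Sum>i<n. X x s i) = real (card J)"
      unfolding X_def parseval[OF basis] by simp
    then show ?thesis
      unfolding w_def swap[symmetric] using J(2) d
      by (simp add: sum_divide_distrib[symmetric] divide_le_eq of_nat_mult[symmetric] del: of_nat_mult)
  qed
  moreover have "(\<Sum>i<n. w i * \<mu> i) = 0"
  proof -
    have "(\<Sum>x\<in>J. \<Sum>s<d. \<Sum>i<n. \<mu> i * X x s i) = 0"
      unfolding X_def using isotropic_eigen_sum[OF spec isotropic] by simp
    moreover have "(\<Sum>i<n. w i * \<mu> i) = (\<Sum>i<n. \<Sum>s<d. \<Sum>x\<in>J. \<mu> i * X x s i) / real d"
      unfolding w_def by (simp add: sum_divide_distrib sum_distrib_left sum_distrib_right mult_ac)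
    ultimately show ?thesis unfolding swap by simp
  qed
  ultimately show ?thesis by blast
qed

section \<open>A rearrangement inequality\<close>

lemma threshold_prefix_bound:
  fixes x w :: "nat \<Rightarrow> real"
  assumes km: "k \<le> m" and t: "t \<le> 0"
    and below: "\<And>i. i < k \<Longrightarrow> x i \<le> t" and above: "\<And>i. k \<le> i \<Longrightarrow> i < m \<Longrightarrow> t \<le> x i"
    and w01: "\<And>i. i < m \<Longrightarrow> 0 \<le> w i \<and> w i \<le> 1"
    and tw: "t * real k \<le> t * (\<Sum>i<m. w i)"
  shows "(\<Sum>i<k. x i) \<le> (\<Sum>i<m. w i * x i)"
proof -
  have "(\<Sum>i<k. x i - t) \<le> (\<Sum>i<k. w i * (x i - t))"
  proof (rule sum_mono)
    fix i assume "i \<in> {..<k}"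
    then have "(1 - w i) * (x i - t) \<le> 0"
      using below[of i] w01[of i] km by (intro mult_nonneg_nonpos) auto
    then show "x i - t \<le> w i * (x i - t)" by (simp add: algebra_simps)
  qed
  moreover have "0 \<le> (\<Sum>i\<in>{k..<m}. w i * (x i - t))"
    using above w01 by (intro sum_nonneg) auto
  moreover have "(\<Sum>i<m. w i * x i) = (\<Sum>i<m. w i * (x i - t)) + t * (\<Sum>i<m. w i)"
    by (simp add: algebra_simps sum_subtractf sum_distrib_left)
  moreover have "(\<Sum>i<m. w i * (x i - t)) = (\<Sum>i<k. w i * (x i - t)) + (\<Sum>i\<in>{k..<m}. w i * (x i - t))"
    using sum.atLeastLessThan_concat[of 0 k m "\<lambda>i. w i * (x i - t)"] km by (simp add: lessThan_atLeast0)
  moreover have "(\<Sum>i<k. x i - t) = (\<Sum>i<k. x i) - t * real k"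
    by (simp add: sum_subtractf mult.commute)
  ultimately show ?thesis using tw by linarith
qed

lemma prefix_sum_le_weighted_sum:
  fixes x w :: "nat \<Rightarrow> real"
  assumes sorted: "\<And>i j. i \<le> j \<Longrightarrow> j < m \<Longrightarrow> x i \<le> x j"
    and w01: "\<And>i. i < m \<Longrightarrow> 0 \<le> w i \<and> w i \<le> 1" and wsum: "(\<Sum>i<m. w i) \<le> real C"
  shows "\<exists>k\<le>C. k \<le> m \<and> (\<Sum>i<k. x i) \<le> (\<Sum>i<m. w i * x i)"
proof -
  \<comment> \<open>The negative \<open>x i\<close> are exactly those with \<open>i < N\<close>; the threshold is \<open>0\<close> if there are at most
     \<open>C\<close> of them and \<open>x C\<close> otherwise.\<close>
  define N where "N = (LEAST i. i = m \<or> 0 \<le> x i)"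
  have N: "N \<le> m" unfolding N_def by (rule Least_le) simp
  have neg: "x i < 0" if "i < N" for i
    using not_less_Least[OF that[unfolded N_def]] by auto
  have nonneg: "0 \<le> x i" if "N \<le> i" "i < m" for i
  proof -
    have "N = m \<or> 0 \<le> x N" unfolding N_def by (rule LeastI[of _ m]) simp
    then show ?thesis using sorted[OF that] that by auto
  qed
  show ?thesis
  proof (cases "N \<le> C")
    case True
    have "(\<Sum>i<N. x i) \<le> (\<Sum>i<m. w i * x i)"
      using neg nonneg w01 N by (intro threshold_prefix_bound[where t = 0]) (auto simp: less_imp_le)
    then show ?thesis using True N by blast
  next
    case False
    then have C: "C < N" "C < m" using N by auto
    have "(\<Sum>i<C. x i) \<le> (\<Sum>i<m. w i * x i)"
    proof (rule threshold_prefix_bound[where t = "x C"])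
      show "x C * real C \<le> x C * (\<Sum>i<m. w i)"
        using wsum neg[OF C(1)] by (intro mult_left_mono_neg) auto
    qed (use C neg sorted w01 in \<open>auto simp: less_imp_le\<close>)
    then show ?thesis using C by (intro exI[of _ C]) auto
  qed
qed

lemma sorted_eigenvalue_prefix_bound:
  fixes \<mu> :: "real list" and w :: "nat \<Rightarrow> real"
  assumes sorted: "sorted \<mu>" and len: "length \<mu> = Suc m"
    and w01: "\<And>i. i < Suc m \<Longrightarrow> 0 \<le> w i \<and> w i \<le> 1" and top: "w m = 1"
    and wsum: "(\<Sum>i<Suc m. w i) \<le> real c" and wmu: "(\<Sum>i<Suc m. w i * \<mu> ! i) = 0"
  shows "\<exists>k\<le>c - 1. k \<le> m \<and> last \<mu> + (\<Sum>i<k. \<mu> ! i) \<le> 0"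
proof -
  have "(\<Sum>i<m. w i) \<le> real (c - 1)"
    using wsum top sum_nonneg[of "{..<m}" w] w01 by (simp add: of_nat_diff)
  then obtain k where k: "k \<le> c - 1" "k \<le> m" "(\<Sum>i<k. \<mu> ! i) \<le> (\<Sum>i<m. w i * \<mu> ! i)"
    using prefix_sum_le_weighted_sum[of m "\<lambda>i. \<mu> ! i" w "c - 1"] sorted len w01
    by (auto simp: sorted_nth_mono)
  moreover have "last \<mu> = \<mu> ! m" using len by (cases "\<mu> = []") (auto simp: last_conv_nth)
  ultimately show ?thesis using wmu top by (intro exI[of _ k]) auto
qed

section \<open>The spectral bound\<close>

lemma orth_projector_hermitian:
  assumes "orth_projector d P" "s < d" "r < d"
  shows "cnj (P $$ (s,r)) = P $$ (r,s)"
proof -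
  have P: "P \<in> carrier_mat d d" "mat_adjoint P = P" using assms(1) unfolding orth_projector_def by auto
  have "P $$ (r,s) = mat_adjoint P $$ (r,s)" using P by simp
  also have "\<dots> = cnj (P $$ (s,r))" using P(1) assms(2,3) by (intro index_mat_adjoint) auto
  finally show ?thesis ..
qed

lemma orth_projector_idempotent:
  assumes "orth_projector d P" "s < d" "s' < d"
  shows "(\<Sum>r<d. P $$ (s,r) * P $$ (r,s')) = P $$ (s,s')"
  using assms index_mult_mat_sum[of P d d P d s s'] unfolding orth_projector_def by simp

lemma index_foldr_add_mat:
  assumes "\<forall>k\<in>set ks. M k \<in> carrier_mat d d" "Z \<in> carrier_mat d d"
  shows "foldr (\<lambda>k M'. M k + M') ks Z \<in> carrier_mat d d \<and>
    (\<forall>s<d. \<forall>s'<d. foldr (\<lambda>k M'. M k + M') ks Z $$ (s,s') = (\<Sum>k\<leftarrow>ks. M k $$ (s,s')) + Z $$ (s,s'))"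
  using assms by (induct ks) (auto simp: add.assoc)

lemma orth_projectors_measurement:
  assumes proj: "\<And>k. k < c \<Longrightarrow> orth_projector d (Q k)"
    and sum: "foldr (\<lambda>k M. Q k + M) [0..<c] (0\<^sub>m d d) = 1\<^sub>m d"
  shows "projective_measurement c d (\<lambda>k s r. Q k $$ (s,r))"
proof
  fix k s r assume "k < c" "s < d" "r < d"
  then show "cnj (Q k $$ (s,r)) = Q k $$ (r,s)"
    using orth_projector_hermitian proj by blast
next
  fix k s s' assume "k < c" "s < d" "s' < d"
  then show "(\<Sum>r<d. Q k $$ (s,r) * Q k $$ (r,s')) = Q k $$ (s,s')"
    using orth_projector_idempotent proj by blast
next
  fix s s' assume s: "s < d" "s' < d"
  have "\<forall>k\<in>set [0..<c]. Q k \<in> carrier_mat d d"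
    using proj unfolding orth_projector_def by auto
  then have "foldr (\<lambda>k M. Q k + M) [0..<c] (0\<^sub>m d d) $$ (s,s') = (\<Sum>k\<leftarrow>[0..<c]. Q k $$ (s,s'))"
    using index_foldr_add_mat[of "[0..<c]" Q d "0\<^sub>m d d"] s by auto
  then show "(\<Sum>k<c. Q k $$ (s,s')) = (if s = s' then 1 else 0)"
    using sum s by (simp add: sum_set_upt_conv_sum_list_nat[symmetric] atLeast0LessThan)
qed

lemma quantum_coloring_measurements:
  assumes "quantum_coloring n E c d P"
  shows "coloring_measurements n c d (\<lambda>u k s r. P u k $$ (s,r)) (\<lambda>u w. if E u w then 1 else 0)"
proof (rule coloring_measurements.intro)
  have proj: "\<And>u k. u < n \<Longrightarrow> k < c \<Longrightarrow> orth_projector d (P u k)"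
    and sum: "\<And>u. u < n \<Longrightarrow> foldr (\<lambda>k M. P u k + M) [0..<c] (0\<^sub>m d d) = 1\<^sub>m d"
    and edge: "\<And>u w k. E u w \<Longrightarrow> k < c \<Longrightarrow> P u k * P w k = 0\<^sub>m d d"
    using assms unfolding quantum_coloring_def by auto
  show "projective_measurement c d (\<lambda>k s r. P u k $$ (s,r))" if "u < n" for u
    using orth_projectors_measurement proj sum that by blast
  show "(\<Sum>r<d. P u k $$ (s,r) * P w k $$ (r,s')) = 0"
    if "u < n" "w < n" "(if E u w then 1 else 0 :: complex) \<noteq> 0" "k < c" "s < d" "s' < d" for u w k s s'
    using that edge[of u w k] index_mult_mat_sum[of "P u k" d d "P w k" d s s'] proj
    unfolding orth_projector_def by (auto split: if_splits)
qed

lemma classical_coloring_quantum_colorable: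
  assumes "simple_graph n E"
  shows "quantum_colorable n E n"
proof -
  define P where "P v k = (if k = v then 1\<^sub>m 1 else 0\<^sub>m 1 1 :: complex mat)" for v k :: nat
  have carrier: "P v k \<in> carrier_mat 1 1" for v k unfolding P_def by auto
  have "orth_projector 1 (P v k)" for v k
    unfolding orth_projector_def P_def by (auto intro!: eq_matI)
  moreover have "foldr (\<lambda>k M. P v k + M) [0..<n] (0\<^sub>m 1 1) = 1\<^sub>m 1" if v: "v < n" for v
  proof -
    have "(\<Sum>k\<leftarrow>[0..<n]. P v k $$ (0,0)) = (\<Sum>k<n. P v k $$ (0,0))"
      by (simp add: sum_set_upt_conv_sum_list_nat[symmetric] atLeast0LessThan)
    also have "\<dots> = (\<Sum>k<n. if k = v then 1 else 0)"
      unfolding P_def by (intro sum.cong) auto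
    finally have "(\<Sum>k\<leftarrow>[0..<n]. P v k $$ (0,0)) = 1" using v by simp
    then show ?thesis
      using index_foldr_add_mat[of "[0..<n]" "P v" 1 "0\<^sub>m 1 1"] carrier v by (auto intro!: eq_matI)
  qed
  moreover have "P v k * P w k = 0\<^sub>m 1 1" if "E v w" for v w k
    using assms that unfolding simple_graph_def P_def by auto
  ultimately have "quantum_coloring n E n 1 P"
    unfolding quantum_coloring_def by auto
  then show ?thesis unfolding quantum_colorable_def by auto
qed

lemma adjacency_matrix_symmetric:
  assumes "simple_graph n E" "u < n" "w < n"
  shows "adjacency_matrix n E $$ (u,w) = adjacency_matrix n E $$ (w,u)"
  using assms unfolding simple_graph_def adjacency_matrix_def by auto

lemma quantum_colorable_spectral_weights:
  assumes sg: "simple_graph n E" and col: "quantum_colorable n E c" and t: "t < n"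
  defines "\<mu> \<equiv> eigenvalues_asc (adjacency_matrix n E)"
  shows "\<exists>w. (\<forall>i<n. 0 \<le> w i \<and> w i \<le> 1) \<and> w t = 1 \<and> (\<Sum>i<n. w i) \<le> real c
             \<and> (\<Sum>i<n. w i * \<mu> ! i) = 0"
proof -
  obtain d P where d: "d > 0" and qc: "quantum_coloring n E c d P"
    using col unfolding quantum_colorable_def by blast
  let ?a = "\<lambda>u w. if E u w then 1 else 0 :: complex"
  interpret coloring_measurements n c d "\<lambda>u k s r. P u k $$ (s,r)" ?a
    using quantum_coloring_measurements[OF qc] .
  have A: "adjacency_matrix n E \<in> carrier_mat n n" unfolding adjacency_matrix_def by simp
  obtain \<phi> where basis: "orthonormal_basis n \<phi>" and spec:
    "\<forall>u<n. \<forall>w<n. complex_of_real (adjacency_matrix n E $$ (u,w)) = (\<Sum>i<n. complex_of_real (\<mu> ! i) * \<phi> i u * cnj (\<phi> i w))"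
    using real_symmetric_eigenbasis[OF A adjacency_matrix_symmetric[OF sg]] unfolding \<mu>_def by blast
  have spec': "?a u w = (\<Sum>i<n. complex_of_real (\<mu> ! i) * \<phi> i u * cnj (\<phi> i w))" if "u < n" "w < n" for u w
    using spec[rule_format, OF that] that unfolding adjacency_matrix_def by (cases "E u w") auto
  obtain J and g :: "nat \<times> nat \<Rightarrow> nat \<times> nat \<Rightarrow> complex" where
    "finite J" "card J \<le> c * d"
    "\<forall>x\<in>J. \<forall>y\<in>J. cinner ({..<n} \<times> {..<d}) (g x) (g y) = (if x = y then 1 else 0)"
    "\<forall>x\<in>J. (\<Sum>s<d. \<Sum>u<n. \<Sum>w<n. cnj (g x (u,s)) * ?a u w * g x (w,s)) = 0"
    "\<forall>s<d. (\<Sum>x\<in>J. (cmod (\<Sum>u<n. cnj (g x (u,s)) * \<phi> t u))\<^sup>2) = 1"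
    using isotropic_orthonormal_family[OF orthonormal_basis_norm[OF basis t]] by blast
  then show ?thesis
    using spectral_weights_of_isotropic_family[OF basis spec' _ _ d t, of J c g] by auto
qed

lemma adjacency_eigenvalues_sorted:
  assumes "simple_graph n E"
  shows "length (eigenvalues_asc (adjacency_matrix n E)) = n \<and> sorted (eigenvalues_asc (adjacency_matrix n E))"
proof -
  have "adjacency_matrix n E \<in> carrier_mat n n" unfolding adjacency_matrix_def by simp
  then show ?thesis
    using real_symmetric_eigenbasis adjacency_matrix_symmetric[OF assms] by blast
qed

theorem theorem2:
  fixes n :: nat and E :: "nat \<Rightarrow> nat \<Rightarrow> bool" and \<kappa> :: nat
  assumes "n \<ge> 1"
    and "simple_graph n E"
    and "connected_graph n E"
    and "\<kappa> = (LEAST k. k \<le> n \<and>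
            0 \<ge> mu_max (adjacency_matrix n E)
                 + (\<Sum>i=1..k. eigenvalues_asc (adjacency_matrix n E) ! (i - 1)))"
  shows "quantum_chromatic_number n E \<ge> 1 + \<kappa>"
proof -
  let ?\<mu> = "eigenvalues_asc (adjacency_matrix n E)"
  define c where "c = quantum_chromatic_number n E"
  have "quantum_colorable n E c"
    unfolding c_def quantum_chromatic_number_def
    by (rule LeastI[where P = "quantum_colorable n E", OF classical_coloring_quantum_colorable[OF assms(2)]])
  moreover obtain m where n: "n = Suc m" using assms(1) by (cases n) auto
  ultimately obtain w where w01: "\<forall>i<n. 0 \<le> w i \<and> w i \<le> 1" and top: "w m = 1"
    and wsum: "(\<Sum>i<n. w i) \<le> real c" and wmu: "(\<Sum>i<n. w i * ?\<mu> ! i) = 0"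
    using quantum_colorable_spectral_weights[OF assms(2), of c m] by auto
  then obtain k where k: "k \<le> c - 1" "k \<le> m" "last ?\<mu> + (\<Sum>i<k. ?\<mu> ! i) \<le> 0"
    using sorted_eigenvalue_prefix_bound[of ?\<mu> m w c] adjacency_eigenvalues_sorted[OF assms(2)] n
    by auto
  have "\<kappa> \<le> k"
    unfolding assms(4) by (rule Least_le) (use k n in \<open>simp add: mu_max_def sum.atLeast1_atMost_eq\<close>)
  moreover have "1 \<le> c"
    using member_le_sum[of m "{..<n}" w] w01 top wsum n by auto
  ultimately show ?thesis using k unfolding c_def by linarith
qed

end
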